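(* Let $b\ge a\ge 0$. There is a bijection $$\theta:\{\pi\in\mathcal I_{a+b}(321):\mathrm{fp}(\pi)\ge b-a\}\longrightarrow\mathcal Y_{a,b}$$ such that whenever $\theta(\pi)=\lambda$, one has $\mathrm{Des}(\pi)=\mathrm{hd}(\lambda)$.
   Context: $\mathcal I_m(321)$ is the set of involutions in $\mathcal S_m$ avoiding the pattern $321$. $\mathrm{fp}(\pi)$ is the number of fixed points of $\pi$. $\mathrm{Des}(\pi)$ is the set of positions $i$ with $\pi(i)>\pi(i+1)$. $\mathcal Y_{a,b}$ is the set of Young diagrams (partitions) fitting inside an $a\times b$ rectangle ($a$ rows, $b$ columns). For a diagram $\lambda$ with conjugate $\lambda'$ and Durfee square of side $d$ (largest $d$ with $\lambda_d\ge d$), the hook decomposition is $\mathrm{hd}(\lambda)=\{\lambda_i+\lambda'_i-2i+1:1\le i\le d\}$, the sizes of the hooks obtained by successively removing the first row and first column. *)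

theory Defs
  imports "HOL-Combinatorics.Permutations"
begin

text \<open>Permutations of [m] = {1..m}, as functions nat => nat fixing everything outside {1..m}.\<close>

definition avoids321 :: "(nat \<Rightarrow> nat) \<Rightarrow> nat \<Rightarrow> bool" where
  "avoids321 p m \<longleftrightarrow>
     \<not> (\<exists>i j k. 1 \<le> i \<and> i < j \<and> j < k \<and> k \<le> m \<and> p i > p j \<and> p j > p k)"

definition inv321 :: "nat \<Rightarrow> (nat \<Rightarrow> nat) set" where
  "inv321 m = {p. p permutes {1..m} \<and> p \<circ> p = id \<and> avoids321 p m}"

definition fp :: "nat \<Rightarrow> (nat \<Rightarrow> nat) \<Rightarrow> nat" where
  "fp m p = card {i \<in> {1..m}. p i = i}"

definition Des :: "nat \<Rightarrow> (nat \<Rightarrow> nat) \<Rightarrow> nat set" where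
  "Des m p = {i. 1 \<le> i \<and> i < m \<and> p i > p (i + 1)}"

text \<open>Young diagrams in an a x b box: lam i is the length of row i (rows 1..a),
  weakly decreasing, at most b, and lam i = 0 for i = 0 or i > a.\<close>

definition young :: "nat \<Rightarrow> nat \<Rightarrow> (nat \<Rightarrow> nat) set" where
  "young a b = {lam. (\<forall>i. lam i \<le> b) \<and> (\<forall>i j. 1 \<le> i \<longrightarrow> i \<le> j \<longrightarrow> lam j \<le> lam i)
                    \<and> (\<forall>i. (i = 0 \<or> i > a) \<longrightarrow> lam i = 0)}"

definition conjugate :: "(nat \<Rightarrow> nat) \<Rightarrow> nat \<Rightarrow> nat" where
  "conjugate lam j = card {i. 1 \<le> i \<and> j \<le> lam i}"

definition durfee :: "(nat \<Rightarrow> nat) \<Rightarrow> nat" where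
  "durfee lam = (GREATEST d. d \<le> lam d)"

definition hookdec :: "(nat \<Rightarrow> nat) \<Rightarrow> nat set" where
  "hookdec lam = {lam i + conjugate lam i + 1 - 2 * i | i. 1 \<le> i \<and> i \<le> durfee lam}"


end

theory Submission
  imports Defs
begin

text \<open>The bijection is a composite of three. A 321-avoiding involution of \<open>[a + b]\<close> is an
  arc diagram without nesting arcs and without fixed points below arcs. Marking its closers
  together with its lowest \<open>a - #closers\<close> fixed points gives a lattice path with \<open>a\<close> down-steps
  whose peaks are exactly the descents of the involution; conversely the involution is recovered
  from the path by bracket matching: unmatched steps become the fixed points and the \<open>k\<close>-th
  matched up-step is joined to the \<open>k\<close>-th matched down-step. Finally, a peak after \<open>u\<close> up-steps
  and \<open>d\<close> down-steps is read as a diagonal hook with arm \<open>u - 1\<close> and leg \<open>d\<close>; these Frobenius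
  coordinates describe a diagram in the \<open>a \<times> b\<close> box whose hook at that diagonal cell has size
  \<open>u + d\<close>, the position of the peak.\<close>

definition count_le :: "nat set \<Rightarrow> nat \<Rightarrow> nat" where
  "count_le S x = card {y \<in> S. y \<le> x}"

definition count_ge :: "nat set \<Rightarrow> nat \<Rightarrow> nat" where
  "count_ge S x = card {y \<in> S. x \<le> y}"

lemma count_le_less:
  assumes "finite S" "x < x'" "x' \<in> S"
  shows "count_le S x < count_le S x'"
proof -
  have "{y \<in> S. y \<le> x} \<subset> {y \<in> S. y \<le> x'}"
    using assms(2,3) by (auto dest: leD)
  then show ?thesis
    unfolding count_le_def using assms(1) by (intro psubset_card_mono) auto
qed

lemma count_ge_less:
  assumes "finite S" "x < x'" "x \<in> S"
  shows "count_ge S x' < count_ge S x"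
proof -
  have "{y \<in> S. x' \<le> y} \<subset> {y \<in> S. x \<le> y}"
    using assms(2,3) by (auto dest: leD)
  then show ?thesis
    unfolding count_ge_def using assms(1) by (intro psubset_card_mono) auto
qed

lemma count_le_mono: "finite S \<Longrightarrow> x \<le> x' \<Longrightarrow> count_le S x \<le> count_le S x'"
  unfolding count_le_def by (intro card_mono) auto

lemma count_ge_antimono: "finite S \<Longrightarrow> x \<le> x' \<Longrightarrow> count_ge S x' \<le> count_ge S x"
  unfolding count_ge_def by (intro card_mono) auto

lemma count_le_le_iff:
  assumes "finite S" "x \<in> S" "x' \<in> S"
  shows "count_le S x \<le> count_le S x' \<longleftrightarrow> x \<le> x'"
  using count_le_less[OF assms(1) _ assms(2)] count_le_mono[OF assms(1)] by (meson not_le)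

lemma count_ge_le_iff:
  assumes "finite S" "x \<in> S" "x' \<in> S"
  shows "count_ge S x \<le> count_ge S x' \<longleftrightarrow> x' \<le> x"
  using count_ge_less[OF assms(1) _ assms(2)] count_ge_antimono[OF assms(1)] by (meson not_le)

lemma bij_betw_count_le:
  assumes "finite S"
  shows "bij_betw (count_le S) S {1..card S}"
proof -
  have inj: "inj_on (count_le S) S"
    by (intro inj_onI) (metis assms count_le_le_iff order_antisym order_refl)
  have "count_le S x \<in> {1..card S}" if "x \<in> S" for x
    using that assms unfolding count_le_def
    by (auto simp: Suc_le_eq card_gt_0_iff intro: card_mono)
  then have "count_le S ` S \<subseteq> {1..card S}" by blast
  moreover have "card (count_le S ` S) = card {1..card S}"
    using inj by (simp add: card_image)
  ultimately show ?thesis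
    using inj by (simp add: bij_betw_def card_subset_eq)
qed

lemma bij_betw_count_ge:
  assumes "finite S"
  shows "bij_betw (count_ge S) S {1..card S}"
proof -
  have inj: "inj_on (count_ge S) S"
    by (intro inj_onI) (metis assms count_ge_le_iff order_antisym order_refl)
  have "count_ge S x \<in> {1..card S}" if "x \<in> S" for x
    using that assms unfolding count_ge_def
    by (auto simp: Suc_le_eq card_gt_0_iff intro: card_mono)
  then have "count_ge S ` S \<subseteq> {1..card S}" by blast
  moreover have "card (count_ge S ` S) = card {1..card S}"
    using inj by (simp add: card_image)
  ultimately show ?thesis
    using inj by (simp add: bij_betw_def card_subset_eq)
qed

lemma count_ge_image:
  assumes "strict_mono_on P f" "s \<in> P"
  shows "count_ge (f ` P) (f s) = count_ge P (s :: nat)"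
proof -
  have "{y \<in> f ` P. f s \<le> (y :: nat)} = f ` {y \<in> P. s \<le> y}"
    using assms by (auto simp: strict_mono_on_less_eq)
  moreover have "inj_on f {y \<in> P. s \<le> y}"
    using strict_mono_on_imp_inj_on[OF assms(1)] by (rule inj_on_subset) auto
  ultimately show ?thesis unfolding count_ge_def by (simp add: card_image)
qed

lemma count_ge_inj_image: "inj_on f S \<Longrightarrow> count_ge (f ` S) x = card {i \<in> S. x \<le> f i}"
proof -
  assume inj: "inj_on f S"
  have "{y \<in> f ` S. x \<le> y} = f ` {i \<in> S. x \<le> f i}" by auto
  moreover have "inj_on f {i \<in> S. x \<le> f i}" using inj by (rule inj_on_subset) auto
  ultimately show ?thesis unfolding count_ge_def by (simp add: card_image)
qed

lemma count_ge_Suc: "finite A \<Longrightarrow> count_ge A x \<le> Suc (count_ge A (Suc x))"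
proof -
  assume "finite A"
  moreover have "{y \<in> A. x \<le> y} \<subseteq> insert x {y \<in> A. Suc x \<le> y}" by auto
  ultimately have "count_ge A x \<le> card (insert x {y \<in> A. Suc x \<le> y})"
    unfolding count_ge_def by (intro card_mono) auto
  also have "\<dots> \<le> Suc (count_ge A (Suc x))"
    unfolding count_ge_def by (rule card_insert_le_m1) simp_all
  finally show ?thesis .
qed

lemma count_ge_0 [simp]: "count_ge A 0 = card A"
  unfolding count_ge_def by simp

lemma count_ge_le_card: "finite A \<Longrightarrow> count_ge A x \<le> card A"
  unfolding count_ge_def by (intro card_mono) auto

lemma card_le_count_ge_add: "finite A \<Longrightarrow> card A \<le> count_ge A x + x"
proof -
  assume "finite A"
  moreover have "A \<subseteq> {y \<in> A. x \<le> y} \<union> {..<x}" by auto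
  ultimately have "card A \<le> card ({y \<in> A. x \<le> y} \<union> {..<x})" by (intro card_mono) auto
  also have "\<dots> \<le> card {y \<in> A. x \<le> y} + card {..<x}" by (rule card_Un_le)
  finally show ?thesis unfolding count_ge_def by simp
qed

lemma count_ge_add_le: "A \<subseteq> {..<b} \<Longrightarrow> count_ge A x + x \<le> max b x"
proof -
  assume "A \<subseteq> {..<b}"
  then have "count_ge A x \<le> card {x..<b}"
    unfolding count_ge_def by (intro card_mono) auto
  then show ?thesis by simp
qed

lemma mem_iff_count_ge_Suc_less:
  assumes "finite A"
  shows "x \<in> A \<longleftrightarrow> count_ge A (Suc x) < count_ge A x"
proof
  assume "x \<in> A"
  then show "count_ge A (Suc x) < count_ge A x"
    using count_ge_less[OF assms, of x "Suc x"] by simp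
next
  assume "count_ge A (Suc x) < count_ge A x"
  moreover have "count_ge A (Suc x) = count_ge A x" if "x \<notin> A"
  proof -
    have "{y \<in> A. Suc x \<le> y} = {y \<in> A. x \<le> y}"
      using that by (auto simp: Suc_le_eq le_less)
    then show ?thesis unfolding count_ge_def by simp
  qed
  ultimately show "x \<in> A" by auto
qed

lemma set_eq_if_count_ge_eq:
  assumes "finite A" "finite A'" "\<And>x. count_ge A x = count_ge A' x"
  shows "A = A'"
proof (intro set_eqI)
  fix x
  show "x \<in> A \<longleftrightarrow> x \<in> A'"
    unfolding mem_iff_count_ge_Suc_less[OF assms(1)] mem_iff_count_ge_Suc_less[OF assms(2)] assms(3)
    ..
qed

lemma down_closed_eq_interval:
  assumes "finite S" "\<And>c. c \<in> S \<Longrightarrow> 1 \<le> c" "\<And>c. Suc c \<in> S \<Longrightarrow> 1 \<le> c \<Longrightarrow> c \<in> S"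
  shows "S = {1..card S}"
proof (cases "S = {}")
  case False
  define m where "m = Max S"
  have "m \<in> S" using False assms(1) m_def by simp
  have "c \<in> S" if "1 \<le> c" "c \<le> m" for c
    using that
  proof (induction "m - c" arbitrary: c)
    case 0
    then show ?case using \<open>m \<in> S\<close> by simp
  next
    case (Suc k)
    then have "k = m - Suc c" "1 \<le> Suc c" "Suc c \<le> m" by auto
    then have "Suc c \<in> S" using Suc.hyps(1) by blast
    then show ?case using assms(3) Suc.prems by blast
  qed
  moreover have "c \<le> m" if "c \<in> S" for c
    using that assms(1) m_def by simp
  ultimately have "S = {1..m}" using assms(2) by (meson atLeastAtMost_iff subsetI subset_antisym)
  then show ?thesis by simp
qed simp

lemma le_card_iff_mem_down_closed:
  assumes "finite S" "\<And>c. c \<in> S \<Longrightarrow> 1 \<le> c" "\<And>c. Suc c \<in> S \<Longrightarrow> 1 \<le> c \<Longrightarrow> c \<in> S" "1 \<le> r"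
  shows "r \<le> card S \<longleftrightarrow> r \<in> S"
  using down_closed_eq_interval[OF assms(1-3)] assms(4) by (metis atLeastAtMost_iff)

lemma nat_eqI_by_le:
  fixes m m' :: nat
  assumes "\<And>r. 1 \<le> r \<Longrightarrow> r \<le> m \<longleftrightarrow> r \<le> m'"
  shows "m = m'"
proof (rule ccontr)
  assume "m \<noteq> m'"
  then consider "m < m'" | "m' < m" by linarith
  then show False using assms[of m] assms[of m'] by cases auto
qed

section \<open>Frobenius coordinates of Young diagrams\<close>

definition frob_pairs :: "nat \<Rightarrow> nat \<Rightarrow> (nat set \<times> nat set) set" where
  "frob_pairs a b = {(A, B). A \<subseteq> {..<b} \<and> B \<subseteq> {..<a} \<and> card A = card B}"

text \<open>The diagram with Frobenius coordinates \<open>(A | B)\<close> (arm and leg lengths of the diagonal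
  hooks): a cell \<open>(r, c)\<close> with \<open>r \<le> c\<close> belongs to it iff at least \<open>r\<close> arms are \<open>\<ge> c - r\<close>,
  and symmetrically below the diagonal.\<close>

definition frob_cell :: "nat set \<Rightarrow> nat set \<Rightarrow> nat \<Rightarrow> nat \<Rightarrow> bool" where
  "frob_cell A B r c \<longleftrightarrow> 1 \<le> r \<and> 1 \<le> c \<and>
     ((r \<le> c \<and> r \<le> count_ge A (c - r)) \<or> (c < r \<and> c \<le> count_ge B (r - c)))"

definition frob_diagram :: "nat set \<Rightarrow> nat set \<Rightarrow> nat \<Rightarrow> nat" where
  "frob_diagram A B r = card {c. frob_cell A B r c}"

text \<open>For \<open>1 \<le> k \<le> card A\<close> this is the \<open>k\<close>-th largest element of \<open>A\<close>, plus one.\<close>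

definition largest_succ :: "nat set \<Rightarrow> nat \<Rightarrow> nat" where
  "largest_succ A k = card {x. k \<le> count_ge A x}"

lemma frob_cell_swap: "card A = card B \<Longrightarrow> frob_cell A B r c = frob_cell B A c r"
  unfolding frob_cell_def by auto

locale frob_pair =
  fixes a b :: nat and A B :: "nat set"
  assumes arms_less: "A \<subseteq> {..<b}" and legs_less: "B \<subseteq> {..<a}" and card_eq: "card A = card B"
begin

lemma finite_arms: "finite A"
  using arms_less finite_subset by blast

lemma finite_legs: "finite B"
  using legs_less finite_subset by blast

lemma swap: "frob_pair b a B A"
  using arms_less legs_less card_eq by unfold_locales auto

lemma frob_cell_col_le:
  assumes "frob_cell A B r c"
  shows "c \<le> b"
proof -
  from assms consider "1 \<le> r" "r \<le> c" "r \<le> count_ge A (c - r)" | "c < r" "c \<le> count_ge B (r - c)"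
    unfolding frob_cell_def by auto
  then show ?thesis
  proof cases
    case 1
    then show ?thesis using count_ge_add_le[OF arms_less, of "c - r"]
      by (auto simp: max_def split: if_splits)
  next
    case 2
    then show ?thesis using count_ge_le_card[OF finite_legs, of "r - c"] card_eq
        card_mono[OF _ arms_less] by simp
  qed
qed

lemma frob_cell_left:
  assumes "frob_cell A B r (Suc c)" "1 \<le> c"
  shows "frob_cell A B r c"
proof -
  from assms have r: "1 \<le> r" unfolding frob_cell_def by auto
  from assms consider "r \<le> c" "r \<le> count_ge A (Suc c - r)" | "r = Suc c" "r \<le> card A"
    | "Suc c < r" "Suc c \<le> count_ge B (r - Suc c)"
    unfolding frob_cell_def by (auto simp: le_Suc_eq)
  then show ?thesis
  proof cases
    case 1
    moreover have "count_ge A (Suc c - r) \<le> count_ge A (c - r)"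
      by (rule count_ge_antimono[OF finite_arms]) simp
    ultimately show ?thesis using r assms(2) unfolding frob_cell_def by auto
  next
    case 2
    then show ?thesis using r assms(2) card_le_count_ge_add[OF finite_legs, of 1] card_eq
      unfolding frob_cell_def by auto
  next
    case 3
    then have "r - c = Suc (r - Suc c)" by simp
    then show ?thesis using 3 r assms(2) count_ge_Suc[OF finite_legs, of "r - Suc c"]
      unfolding frob_cell_def by auto
  qed
qed

lemma frob_cell_row_le: "frob_cell A B r c \<Longrightarrow> r \<le> a"
  using frob_pair.frob_cell_col_le[OF swap] frob_cell_swap[OF card_eq] by blast

lemma frob_cell_up: "frob_cell A B (Suc r) c \<Longrightarrow> 1 \<le> r \<Longrightarrow> frob_cell A B r c"
  using frob_pair.frob_cell_left[OF swap] frob_cell_swap[OF card_eq] by metis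

lemma frob_row_subset: "{c. frob_cell A B r c} \<subseteq> {1..b}"
proof
  fix c
  assume "c \<in> {c. frob_cell A B r c}"
  then show "c \<in> {1..b}" using frob_cell_col_le[of r c] by (simp add: frob_cell_def)
qed

lemma finite_frob_row: "finite {c. frob_cell A B r c}"
  using frob_row_subset finite_subset by blast

lemma frob_cell_iff: "frob_cell A B r c \<longleftrightarrow> 1 \<le> r \<and> 1 \<le> c \<and> c \<le> frob_diagram A B r"
proof (cases "1 \<le> c")
  case True
  have "c \<le> frob_diagram A B r \<longleftrightarrow> c \<in> {c. frob_cell A B r c}"
    unfolding frob_diagram_def
  proof (rule le_card_iff_mem_down_closed[OF finite_frob_row _ _ True])
    show "1 \<le> c" if "c \<in> {c. frob_cell A B r c}" for c
      using that by (simp add: frob_cell_def)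
    show "c \<in> {c. frob_cell A B r c}" if "Suc c \<in> {c. frob_cell A B r c}" "1 \<le> c" for c
      using that frob_cell_left by simp
  qed
  then show ?thesis using True by (auto simp: frob_cell_def)
qed (auto simp: frob_cell_def)

lemma frob_diagram_le: "frob_diagram A B r \<le> b"
  unfolding frob_diagram_def using card_mono[OF _ frob_row_subset] by simp

lemma frob_diagram_antimono:
  assumes "1 \<le> i" "i \<le> j"
  shows "frob_diagram A B j \<le> frob_diagram A B i"
  using assms(2)
proof (induction j rule: dec_induct)
  case (step j)
  have "frob_diagram A B (Suc j) \<le> frob_diagram A B j"
    unfolding frob_diagram_def using frob_cell_up finite_frob_row assms(1) step(1)
    by (intro card_mono) auto
  then show ?case using step.IH by simp
qed simp

lemma frob_diagram_zero: "i = 0 \<or> a < i \<Longrightarrow> frob_diagram A B i = 0"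
proof -
  assume "i = 0 \<or> a < i"
  then have "\<not> frob_cell A B i c" for c
    using frob_cell_row_le[of i c] by (auto simp: frob_cell_def)
  then have "{c. frob_cell A B i c} = {}" by blast
  then show ?thesis unfolding frob_diagram_def by (metis card.empty)
qed

lemma frob_diagram_in_young: "frob_diagram A B \<in> young a b"
  unfolding young_def using frob_diagram_le frob_diagram_antimono frob_diagram_zero by auto

lemma conjugate_frob_diagram: "1 \<le> c \<Longrightarrow> conjugate (frob_diagram A B) c = frob_diagram B A c"
proof -
  assume "1 \<le> c"
  then have "{i. 1 \<le> i \<and> c \<le> frob_diagram A B i} = {i. frob_cell B A c i}"
    using frob_cell_iff frob_cell_swap[OF card_eq] by auto
  then show ?thesis unfolding conjugate_def frob_diagram_def by simp
qed

lemma durfee_frob_diagram: "durfee (frob_diagram A B) = card A"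
proof -
  have "d \<le> frob_diagram A B d \<longleftrightarrow> d \<le> card A" for d
  proof (cases "d = 0")
    case False
    then have "d \<le> frob_diagram A B d \<longleftrightarrow> frob_cell A B d d" using frob_cell_iff by auto
    also have "\<dots> \<longleftrightarrow> d \<le> card A" using False by (auto simp: frob_cell_def)
    finally show ?thesis .
  qed simp
  then show ?thesis unfolding durfee_def by (simp add: Greatest_equality)
qed

lemma finite_largest_succ_set: "1 \<le> k \<Longrightarrow> finite {x. k \<le> count_ge A x}"
proof -
  assume k: "1 \<le> k"
  have "x < b" if "k \<le> count_ge A x" for x
    using that k count_ge_add_le[OF arms_less, of x] by (auto simp: max_def split: if_splits)
  then have "{x. k \<le> count_ge A x} \<subseteq> {..<b}" by blast
  then show ?thesis using finite_subset by blast
qed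

text \<open>Row \<open>i\<close> consists of the \<open>i - 1\<close> cells left of the diagonal, the diagonal cell and the
  \<open>i\<close>-th largest arm.\<close>

lemma frob_diagram_row:
  assumes "1 \<le> i" "i \<le> card A"
  shows "frob_diagram A B i = (i - 1) + largest_succ A i"
proof -
  have "c \<le> count_ge B (i - c)" if "c < i" for c
    using card_le_count_ge_add[OF finite_legs, of "i - c"] assms card_eq that by simp
  then have "{c. frob_cell A B i c} = {1..<i} \<union> (\<lambda>x. x + i) ` {x. i \<le> count_ge A x}"
    using assms(1) unfolding frob_cell_def
    by (auto simp: image_iff) (metis le_add_diff_inverse2 not_less)
  moreover have "{1..<i} \<inter> (\<lambda>x. x + i) ` {x. i \<le> count_ge A x} = {}" by auto
  ultimately have "frob_diagram A B i = card {1..<i} + card ((\<lambda>x. x + i) ` {x. i \<le> count_ge A x})"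
    unfolding frob_diagram_def using finite_largest_succ_set[OF assms(1)]
    by (simp add: card_Un_disjoint)
  also have "\<dots> = (i - 1) + largest_succ A i"
    unfolding largest_succ_def by (subst card_image) (auto simp: inj_on_def)
  finally show ?thesis .
qed

lemma largest_succ_pos: "1 \<le> i \<Longrightarrow> i \<le> card A \<Longrightarrow> 1 \<le> largest_succ A i"
proof -
  assume i: "1 \<le> i" "i \<le> card A"
  then have "0 \<in> {x. i \<le> count_ge A x}" by simp
  then show ?thesis
    unfolding largest_succ_def using finite_largest_succ_set[OF i(1)]
    by (metis One_nat_def Suc_leI card_gt_0_iff empty_iff)
qed

lemma hookdec_frob_diagram:
  "hookdec (frob_diagram A B) = {largest_succ A i + largest_succ B i - 1 | i. 1 \<le> i \<and> i \<le> card A}"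
proof -
  have "frob_diagram A B i + conjugate (frob_diagram A B) i + 1 - 2 * i
      = largest_succ A i + largest_succ B i - 1"
    if "1 \<le> i" "i \<le> card A" for i
    using frob_diagram_row[OF that] conjugate_frob_diagram[OF that(1)]
      frob_pair.frob_diagram_row[OF swap that(1)] largest_succ_pos[OF that]
      frob_pair.largest_succ_pos[OF swap that(1)] that card_eq
    by simp
  then show ?thesis unfolding hookdec_def durfee_frob_diagram by (auto; metis)
qed

end

lemma frob_diagram_inj:
  assumes "(A, B) \<in> frob_pairs a b" "(A', B') \<in> frob_pairs a b"
    and same: "frob_diagram A B = frob_diagram A' B'"
  shows "A = A' \<and> B = B'"
proof -
  interpret F: frob_pair a b A B using assms(1) unfolding frob_pairs_def by unfold_locales auto
  interpret F': frob_pair a b A' B' using assms(2) unfolding frob_pairs_def by unfold_locales auto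
  have cell: "frob_cell A B r c = frob_cell A' B' r c" for r c
    using F.frob_cell_iff F'.frob_cell_iff same by simp
  have "count_ge A x = count_ge A' x" for x
  proof (rule nat_eqI_by_le)
    fix r :: nat
    assume "1 \<le> r"
    then show "r \<le> count_ge A x \<longleftrightarrow> r \<le> count_ge A' x"
      using cell[of r "r + x"] by (simp add: frob_cell_def)
  qed
  then have A: "A = A'" using set_eq_if_count_ge_eq F.finite_arms F'.finite_arms by blast
  have "count_ge B x = count_ge B' x" for x
  proof (cases "x = 0")
    case True
    then show ?thesis using A F.card_eq F'.card_eq by simp
  next
    case False
    show ?thesis
    proof (rule nat_eqI_by_le)
      fix c :: nat
      assume "1 \<le> c"
      then show "c \<le> count_ge B x \<longleftrightarrow> c \<le> count_ge B' x"
        using cell[of "c + x" c] False by (simp add: frob_cell_def)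
    qed
  qed
  then have "B = B'" using set_eq_if_count_ge_eq F.finite_legs F'.finite_legs by blast
  with A show ?thesis by simp
qed

locale young_diagram =
  fixes a b :: nat and lam :: "nat \<Rightarrow> nat"
  assumes young: "lam \<in> young a b"
begin

lemma row_le: "lam i \<le> b"
  using young unfolding young_def by auto

lemma row_antimono: "1 \<le> i \<Longrightarrow> i \<le> j \<Longrightarrow> lam j \<le> lam i"
  using young unfolding young_def by auto

lemma row_zero: "i = 0 \<or> a < i \<Longrightarrow> lam i = 0"
  using young unfolding young_def by auto

lemma column_subset: "1 \<le> c \<Longrightarrow> {i. 1 \<le> i \<and> c \<le> lam i} \<subseteq> {1..a}"
proof
  fix i
  assume "1 \<le> c" "i \<in> {i. 1 \<le> i \<and> c \<le> lam i}"
  then show "i \<in> {1..a}" using row_zero[of i] by (cases "a < i") auto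
qed

lemma le_conjugate_iff: "1 \<le> r \<Longrightarrow> 1 \<le> c \<Longrightarrow> r \<le> conjugate lam c \<longleftrightarrow> c \<le> lam r"
proof -
  assume r: "1 \<le> r" and c: "1 \<le> c"
  have "r \<le> card {i. 1 \<le> i \<and> c \<le> lam i} \<longleftrightarrow> r \<in> {i. 1 \<le> i \<and> c \<le> lam i}"
  proof (rule le_card_iff_mem_down_closed[OF _ _ _ r])
    show "finite {i. 1 \<le> i \<and> c \<le> lam i}"
      using column_subset[OF c] finite_subset by blast
    show "i \<in> {i. 1 \<le> i \<and> c \<le> lam i}" if "Suc i \<in> {i. 1 \<le> i \<and> c \<le> lam i}" "1 \<le> i" for i
      using that row_antimono[of i "Suc i"] by auto
  qed auto
  then show ?thesis unfolding conjugate_def using r by simp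
qed

lemma conjugate_le: "1 \<le> c \<Longrightarrow> conjugate lam c \<le> a"
  unfolding conjugate_def using card_mono[OF _ column_subset] by fastforce

lemma conjugate_antimono: "1 \<le> i \<Longrightarrow> i \<le> j \<Longrightarrow> conjugate lam j \<le> conjugate lam i"
  unfolding conjugate_def using column_subset finite_subset by (intro card_mono) (blast, auto)

lemma durfee_le_row: "durfee lam \<le> lam (durfee lam)"
  and le_durfee: "i \<le> lam i \<Longrightarrow> i \<le> durfee lam"
proof -
  have bound: "i \<le> lam i \<Longrightarrow> i \<le> b" for i
    using row_le order_trans by blast
  show "durfee lam \<le> lam (durfee lam)" unfolding durfee_def
    by (rule GreatestI_nat[where k=0 and b=b]) (auto intro: bound)
  show "i \<le> lam i \<Longrightarrow> i \<le> durfee lam" unfolding durfee_def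
    by (rule Greatest_le_nat[where b=b]) (auto intro: bound)
qed

lemma le_durfee_iff: "1 \<le> i \<Longrightarrow> i \<le> durfee lam \<longleftrightarrow> i \<le> lam i"
  using row_antimono[of i "durfee lam"] durfee_le_row le_durfee by (meson order_trans)

lemma le_durfee_iff_conjugate: "1 \<le> i \<Longrightarrow> i \<le> durfee lam \<longleftrightarrow> i \<le> conjugate lam i"
  using le_durfee_iff le_conjugate_iff by simp

definition arms :: "nat set" where
  "arms = (\<lambda>i. lam i - i) ` {1..durfee lam}"

definition legs :: "nat set" where
  "legs = (\<lambda>i. conjugate lam i - i) ` {1..durfee lam}"

lemma strict_antimono_arm:
  "i \<in> {1..durfee lam} \<Longrightarrow> j \<in> {1..durfee lam} \<Longrightarrow> i < j \<Longrightarrow> lam j - j < lam i - i"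
  using row_antimono[of i j] le_durfee_iff[of j] by auto

lemma strict_antimono_leg:
  "i \<in> {1..durfee lam} \<Longrightarrow> j \<in> {1..durfee lam} \<Longrightarrow> i < j
    \<Longrightarrow> conjugate lam j - j < conjugate lam i - i"
  using conjugate_antimono[of i j] le_durfee_iff_conjugate[of j] by auto

lemma inj_on_arm: "inj_on (\<lambda>i. lam i - i) {1..durfee lam}"
  by (intro inj_onI) (metis strict_antimono_arm less_irrefl nat_neq_iff)

lemma inj_on_leg: "inj_on (\<lambda>i. conjugate lam i - i) {1..durfee lam}"
  by (intro inj_onI) (metis strict_antimono_leg less_irrefl nat_neq_iff)

lemma arms_legs_in_frob_pairs: "(arms, legs) \<in> frob_pairs a b"
proof -
  have "lam i - i < b" if "i \<in> {1..durfee lam}" for i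
    using that row_le[of i] le_durfee_iff[of i] by auto
  then have "arms \<subseteq> {..<b}" unfolding arms_def by auto
  moreover have "conjugate lam i - i < a" if "i \<in> {1..durfee lam}" for i
    using that conjugate_le[of i] le_durfee_iff_conjugate[of i] by auto
  then have "legs \<subseteq> {..<a}" unfolding legs_def by auto
  moreover have "card arms = card legs"
    unfolding arms_def legs_def using card_image[OF inj_on_arm] card_image[OF inj_on_leg] by simp
  ultimately show ?thesis unfolding frob_pairs_def by simp
qed

lemma le_count_ge_arms_iff:
  "1 \<le> r \<Longrightarrow> r \<le> count_ge arms x \<longleftrightarrow> r \<le> durfee lam \<and> x \<le> lam r - r"
proof -
  assume r: "1 \<le> r"
  have "r \<le> card {i \<in> {1..durfee lam}. x \<le> lam i - i}
      \<longleftrightarrow> r \<in> {i \<in> {1..durfee lam}. x \<le> lam i - i}"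
  proof (rule le_card_iff_mem_down_closed[OF _ _ _ r])
    show "i \<in> {i \<in> {1..durfee lam}. x \<le> lam i - i}"
      if "Suc i \<in> {i \<in> {1..durfee lam}. x \<le> lam i - i}" "1 \<le> i" for i
      using that row_antimono[of i "Suc i"] by auto
  qed auto
  then show ?thesis unfolding arms_def count_ge_inj_image[OF inj_on_arm] using r by simp
qed

lemma le_count_ge_legs_iff:
  "1 \<le> r \<Longrightarrow> r \<le> count_ge legs x \<longleftrightarrow> r \<le> durfee lam \<and> x \<le> conjugate lam r - r"
proof -
  assume r: "1 \<le> r"
  have "r \<le> card {i \<in> {1..durfee lam}. x \<le> conjugate lam i - i}
      \<longleftrightarrow> r \<in> {i \<in> {1..durfee lam}. x \<le> conjugate lam i - i}"
  proof (rule le_card_iff_mem_down_closed[OF _ _ _ r])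
    show "i \<in> {i \<in> {1..durfee lam}. x \<le> conjugate lam i - i}"
      if "Suc i \<in> {i \<in> {1..durfee lam}. x \<le> conjugate lam i - i}" "1 \<le> i" for i
      using that conjugate_antimono[of i "Suc i"] by auto
  qed auto
  then show ?thesis unfolding legs_def count_ge_inj_image[OF inj_on_leg] using r by simp
qed

lemma frob_cell_arms_legs_iff: "frob_cell arms legs r c \<longleftrightarrow> 1 \<le> r \<and> 1 \<le> c \<and> c \<le> lam r"
proof (cases "1 \<le> r \<and> 1 \<le> c")
  case True
  then have r: "1 \<le> r" and c: "1 \<le> c" by auto
  show ?thesis
  proof (cases "r \<le> c")
    case True
    then have "frob_cell arms legs r c \<longleftrightarrow> r \<le> durfee lam \<and> c - r \<le> lam r - r"
      using r c le_count_ge_arms_iff by (simp add: frob_cell_def)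
    also have "\<dots> \<longleftrightarrow> c \<le> lam r"
      using True le_durfee_iff[OF r] by auto
    finally show ?thesis using r c by simp
  next
    case False
    then have "frob_cell arms legs r c \<longleftrightarrow> c \<le> durfee lam \<and> r - c \<le> conjugate lam c - c"
      using r c le_count_ge_legs_iff by (simp add: frob_cell_def)
    also have "\<dots> \<longleftrightarrow> c \<le> lam r"
      using False row_antimono[of c r] le_durfee_iff_conjugate[OF c] le_durfee_iff[OF c]
        le_conjugate_iff[OF r c] by auto
    finally show ?thesis using r c by simp
  qed
qed (auto simp: frob_cell_def)

lemma frob_diagram_arms_legs: "frob_diagram arms legs = lam"
proof
  fix r
  show "frob_diagram arms legs r = lam r"
  proof (cases "r = 0")
    case True
    then show ?thesis using row_zero by (simp add: frob_diagram_def frob_cell_def)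
  next
    case False
    then have "{c. frob_cell arms legs r c} = {1..lam r}"
      using frob_cell_arms_legs_iff by auto
    then show ?thesis unfolding frob_diagram_def by simp
  qed
qed

end

lemma bij_betw_frob_diagram: "bij_betw (\<lambda>(A, B). frob_diagram A B) (frob_pairs a b) (young a b)"
proof -
  have "inj_on (\<lambda>(A, B). frob_diagram A B) (frob_pairs a b)"
    by (intro inj_onI) (auto dest: frob_diagram_inj)
  moreover have "(\<lambda>(A, B). frob_diagram A B) ` frob_pairs a b = young a b"
  proof (intro equalityI subsetI)
    fix lam
    assume "lam \<in> (\<lambda>(A, B). frob_diagram A B) ` frob_pairs a b"
    then obtain A B where "(A, B) \<in> frob_pairs a b" "lam = frob_diagram A B" by auto
    then show "lam \<in> young a b"
      using frob_pair.frob_diagram_in_young unfolding frob_pairs_def frob_pair_def by auto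
  next
    fix lam
    assume "lam \<in> young a b"
    then interpret young_diagram a b lam by unfold_locales
    show "lam \<in> (\<lambda>(A, B). frob_diagram A B) ` frob_pairs a b"
      using frob_diagram_arms_legs arms_legs_in_frob_pairs by force
  qed
  ultimately show ?thesis unfolding bij_betw_def by simp
qed

section \<open>Lattice paths and their peaks\<close>

definition words :: "nat \<Rightarrow> nat \<Rightarrow> nat set set" where
  "words a b = {D. D \<subseteq> {1..a + b} \<and> card D = a}"

lemma card_words: "card (words a b) = (a + b) choose a"
  unfolding words_def using n_subsets[of "{1..a + b}" a] by simp

lemma card_frob_pairs: "card (frob_pairs a b) = (a + b) choose a"
proof -
  define subsets where "subsets m k = {A. A \<subseteq> {..<m} \<and> card A = k}" for m k :: nat
  have "frob_pairs a b = (\<Union>k\<in>{..a}. subsets b k \<times> subsets a k)"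
  proof (intro equalityI subsetI)
    fix p
    assume "p \<in> frob_pairs a b"
    then obtain A B where "p = (A, B)" "A \<subseteq> {..<b}" "B \<subseteq> {..<a}" "card A = card B"
      unfolding frob_pairs_def by auto
    moreover from \<open>B \<subseteq> {..<a}\<close> have "card B \<le> a" using card_mono[of "{..<a}" B] by simp
    ultimately show "p \<in> (\<Union>k\<in>{..a}. subsets b k \<times> subsets a k)" unfolding subsets_def by auto
  next
    fix p
    assume "p \<in> (\<Union>k\<in>{..a}. subsets b k \<times> subsets a k)"
    then show "p \<in> frob_pairs a b" unfolding subsets_def frob_pairs_def by auto
  qed
  moreover have "finite (subsets m k)" for m k
    unfolding subsets_def by (rule finite_subset[of _ "Pow {..<m}"]) auto
  ultimately have "card (frob_pairs a b) = (\<Sum>k\<in>{..a}. card (subsets b k \<times> subsets a k))"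
    by (simp only:) (rule card_UN_disjoint, auto simp: subsets_def)
  also have "\<dots> = (\<Sum>k\<le>a. (b choose k) * (a choose (a - k)))"
  proof (rule sum.cong)
    fix k
    assume "k \<in> {..a}"
    then show "card (subsets b k \<times> subsets a k) = (b choose k) * (a choose (a - k))"
      using n_subsets[of "{..<b}" k] n_subsets[of "{..<a}" k] binomial_symmetric[of k a]
      by (simp add: subsets_def card_cartesian_product)
  qed simp
  also have "\<dots> = (b + a) choose a" by (rule vandermonde)
  finally show ?thesis by (simp add: add.commute)
qed

text \<open>A word \<open>D \<subseteq> {1..n}\<close> is read as a lattice path whose \<open>i\<close>-th step goes down iff \<open>i \<in> D\<close>.\<close>

definition downs :: "nat set \<Rightarrow> nat \<Rightarrow> nat" where
  "downs D p = card (D \<inter> {1..p})"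

definition ups :: "nat set \<Rightarrow> nat \<Rightarrow> nat" where
  "ups D p = card ({1..p} - D)"

definition peaks :: "nat \<Rightarrow> nat set \<Rightarrow> nat set" where
  "peaks n D = {i. 1 \<le> i \<and> i < n \<and> i \<notin> D \<and> Suc i \<in> D}"

definition word_frob :: "nat \<Rightarrow> nat \<Rightarrow> nat set \<Rightarrow> nat set \<times> nat set" where
  "word_frob a b D = ((\<lambda>s. ups D s - 1) ` peaks (a + b) D, downs D ` peaks (a + b) D)"

lemma downs_add_ups: "downs D p + ups D p = p"
proof -
  have "(D \<inter> {1..p}) \<union> ({1..p} - D) = {1..p}" by auto
  then have "card {1..p} = card ((D \<inter> {1..p}) \<union> ({1..p} - D))" by simp
  also have "\<dots> = card (D \<inter> {1..p}) + card ({1..p} - D)"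
    by (rule card_Un_disjoint) auto
  finally show ?thesis unfolding downs_def ups_def by simp
qed

lemma downs_Suc: "downs D (Suc p) = downs D p + (if Suc p \<in> D then 1 else 0)"
proof -
  have "D \<inter> {1..Suc p} = (D \<inter> {1..p}) \<union> (D \<inter> {Suc p})" by auto
  then show ?thesis unfolding downs_def by (auto simp: card_insert_if Int_insert_right)
qed

lemma ups_Suc: "ups D (Suc p) = ups D p + (if Suc p \<in> D then 0 else 1)"
  using downs_add_ups[of D p] downs_add_ups[of D "Suc p"] downs_Suc[of D p]
  by (auto split: if_splits)

lemma downs_mono: "p \<le> q \<Longrightarrow> downs D p \<le> downs D q"
  unfolding downs_def by (intro card_mono) auto

lemma ups_mono: "p \<le> q \<Longrightarrow> ups D p \<le> ups D q"
  unfolding ups_def by (intro card_mono) auto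

lemma downs_split: "p \<le> q \<Longrightarrow> downs D q = downs D p + card (D \<inter> {p<..q})"
proof -
  assume "p \<le> q"
  then have "D \<inter> {1..q} = (D \<inter> {1..p}) \<union> (D \<inter> {p<..q})" by auto
  then show ?thesis unfolding downs_def by (simp add: card_Un_disjoint disjoint_iff)
qed

lemma downs_eq_if_no_downs:
  assumes "p \<le> q" "\<And>x. p < x \<Longrightarrow> x \<le> q \<Longrightarrow> x \<notin> D"
  shows "downs D q = downs D p"
proof -
  have "D \<inter> {p<..q} = {}" using assms(2) by auto
  then show ?thesis using downs_split[OF assms(1), of D] by simp
qed

lemma downs_less_downs_mem:
  assumes "p < q" "q \<in> D"
  shows "downs D p < downs D q"
proof -
  obtain q' where "q = Suc q'" "p \<le> q'" using assms(1) by (cases q) auto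
  then show ?thesis using assms(2) downs_mono[of p q' D] downs_Suc[of D q'] by simp
qed

lemma downs_le_card: "finite D \<Longrightarrow> downs D p \<le> card D"
  unfolding downs_def by (intro card_mono) auto

lemma downs_full: "D \<subseteq> {1..n} \<Longrightarrow> downs D n = card D"
  unfolding downs_def by (simp add: Int_absorb2)

lemma downs_eq_if_prefix_eq:
  assumes "\<And>i. i \<le> p \<Longrightarrow> i \<in> D \<longleftrightarrow> i \<in> D'"
  shows "downs D p = downs D' p"
proof -
  have "D \<inter> {1..p} = D' \<inter> {1..p}" using assms by auto
  then show ?thesis unfolding downs_def by simp
qed

lemma ups_pos_at_peak: "s \<in> peaks n D \<Longrightarrow> 1 \<le> ups D s"
proof -
  assume "s \<in> peaks n D"
  then have "s \<in> {1..s} - D" unfolding peaks_def by auto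
  then show ?thesis unfolding ups_def by (metis One_nat_def Suc_leI card_gt_0_iff empty_iff
        finite_Diff finite_atLeastAtMost)
qed

lemma finite_peaks: "finite (peaks n D)"
  unfolding peaks_def by (rule finite_subset[of _ "{..<n}"]) auto

lemma strict_mono_on_downs_peaks: "strict_mono_on (peaks n D) (downs D)"
proof (rule strict_mono_onI)
  fix s s'
  assume "s \<in> peaks n D" "s < s'"
  then show "downs D s < downs D s'"
    using downs_Suc[of D s] downs_mono[of "Suc s" s' D] unfolding peaks_def by simp
qed

lemma strict_mono_on_ups_peaks: "strict_mono_on (peaks n D) (\<lambda>s. ups D s - 1)"
proof (rule strict_mono_onI)
  fix s s'
  assume s: "s \<in> peaks n D" "s' \<in> peaks n D" "s < s'"
  then obtain t where "s' = Suc t" "s \<le> t" by (cases s') auto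
  then show "ups D s - 1 < ups D s' - 1"
    using s ups_Suc[of D t] ups_mono[of s t D] ups_pos_at_peak[OF s(1)] unfolding peaks_def by simp
qed

lemma word_frob_in_frob_pairs:
  assumes "D \<in> words a b"
  shows "word_frob a b D \<in> frob_pairs a b"
proof -
  let ?P = "peaks (a + b) D"
  have D: "D \<subseteq> {1..a + b}" "card D = a" using assms unfolding words_def by auto
  have "ups D s - 1 < b" if "s \<in> ?P" for s
  proof -
    have "ups D s \<le> ups D (a + b)" using that unfolding peaks_def by (intro ups_mono) auto
    also have "\<dots> = b" using downs_add_ups[of D "a + b"] downs_full[OF D(1)] D(2) by simp
    finally show ?thesis using ups_pos_at_peak[OF that] by simp
  qed
  moreover have "downs D s < a" if "s \<in> ?P" for s
  proof -
    have "finite D" using D(1) finite_subset by blast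
    then show ?thesis using that downs_Suc[of D s] downs_le_card[of D "Suc s"] D(2)
      unfolding peaks_def by simp
  qed
  moreover have "card ((\<lambda>s. ups D s - 1) ` ?P) = card (downs D ` ?P)"
    using strict_mono_on_imp_inj_on[OF strict_mono_on_ups_peaks]
      strict_mono_on_imp_inj_on[OF strict_mono_on_downs_peaks] by (simp add: card_image)
  ultimately show ?thesis unfolding word_frob_def frob_pairs_def by auto
qed

lemma count_ge_le_card_iff_mem_upset:
  assumes "finite P" "s \<in> P" "U \<subseteq> P" "\<And>u v. u \<in> U \<Longrightarrow> v \<in> P \<Longrightarrow> u \<le> v \<Longrightarrow> v \<in> U"
  shows "count_ge P s \<le> card U \<longleftrightarrow> s \<in> U"
proof
  assume "s \<in> U"
  then have "{y \<in> P. s \<le> y} \<subseteq> U" using assms(4) by auto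
  then show "count_ge P s \<le> card U"
    unfolding count_ge_def using assms(1,3) finite_subset by (intro card_mono) blast+
next
  assume le: "count_ge P s \<le> card U"
  show "s \<in> U"
  proof (rule ccontr)
    assume "s \<notin> U"
    moreover have "s \<le> u" if "u \<in> U" for u
      using assms(4)[OF that assms(2)] \<open>s \<notin> U\<close> by (metis nat_le_linear)
    ultimately have "U \<subseteq> {y \<in> P. s \<le> y} - {s}" using assms(3) by auto
    then have "card U \<le> card ({y \<in> P. s \<le> y} - {s})" using assms(1) by (intro card_mono) auto
    also have "\<dots> < count_ge P s"
      unfolding count_ge_def using assms(1,2) by (intro card_Diff1_less) auto
    finally show False using le by simp
  qed
qed

lemma largest_succ_strict_mono_image:
  assumes "finite P" "strict_mono_on P f" "s \<in> P"
  shows "largest_succ (f ` P) (count_ge P s) = Suc (f s :: nat)"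
proof -
  have "count_ge P s \<le> count_ge (f ` P) x \<longleftrightarrow> x \<le> f s" for x
  proof -
    have "count_ge (f ` P) x = card {t \<in> P. x \<le> f t}"
      by (rule count_ge_inj_image[OF strict_mono_on_imp_inj_on[OF assms(2)]])
    moreover have "count_ge P s \<le> card {t \<in> P. x \<le> f t} \<longleftrightarrow> s \<in> {t \<in> P. x \<le> f t}"
      using assms(2) by (intro count_ge_le_card_iff_mem_upset[OF assms(1,3)])
        (auto dest: strict_mono_on_leD)
    ultimately show ?thesis using assms(3) by simp
  qed
  then have "{x. count_ge P s \<le> count_ge (f ` P) x} = {..f s}" by auto
  then show ?thesis unfolding largest_succ_def by simp
qed

lemma hookdec_word_frob:
  assumes "D \<in> words a b"
  shows "hookdec ((\<lambda>(A, B). frob_diagram A B) (word_frob a b D)) = peaks (a + b) D"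
proof -
  let ?P = "peaks (a + b) D"
  let ?A = "(\<lambda>s. ups D s - 1) ` ?P" and ?B = "downs D ` ?P"
  interpret frob_pair a b ?A ?B
    using word_frob_in_frob_pairs[OF assms] unfolding word_frob_def frob_pairs_def
    by unfold_locales auto
  have card_A: "card ?A = card ?P"
    using strict_mono_on_imp_inj_on[OF strict_mono_on_ups_peaks] by (simp add: card_image)
  have hook: "largest_succ ?A (count_ge ?P s) + largest_succ ?B (count_ge ?P s) - 1 = s"
    if "s \<in> ?P" for s
    using largest_succ_strict_mono_image[OF finite_peaks strict_mono_on_ups_peaks that]
      largest_succ_strict_mono_image[OF finite_peaks strict_mono_on_downs_peaks that]
      ups_pos_at_peak[OF that] downs_add_ups[of D s]
    by simp
  have "{largest_succ ?A i + largest_succ ?B i - 1 | i. 1 \<le> i \<and> i \<le> card ?A}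
      = (\<lambda>i. largest_succ ?A i + largest_succ ?B i - 1) ` count_ge ?P ` ?P"
    using bij_betw_count_ge[OF finite_peaks, of "a + b" D] card_A
    unfolding bij_betw_def by auto
  also have "\<dots> = ?P" using hook by (auto simp: image_image)
  finally show ?thesis using hookdec_frob_diagram unfolding word_frob_def by simp
qed

lemma strict_mono_images_match:
  fixes P P' :: "nat set"
  assumes "finite P'" "strict_mono_on P f" "strict_mono_on P g"
    and "strict_mono_on P' f'" "strict_mono_on P' g'"
    and "f ` P = f' ` P'" "g ` P = g' ` P'" "s \<in> P"
  shows "\<exists>s'\<in>P'. f s = (f' s' :: nat) \<and> g s = (g' s' :: nat)"
proof -
  have "f s \<in> f' ` P'" "g s \<in> g' ` P'" using assms(6-8) by blast+
  then obtain s' s'' where s': "s' \<in> P'" "f' s' = f s" and s'': "s'' \<in> P'" "g' s'' = g s"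
    by (metis imageE)
  have "count_ge P' s' = count_ge P s"
    using count_ge_image[OF assms(4) s'(1)] count_ge_image[OF assms(2,8)] assms(6) s'(2) by simp
  moreover have "count_ge P' s'' = count_ge P s"
    using count_ge_image[OF assms(5) s''(1)] count_ge_image[OF assms(3,8)] assms(7) s''(2) by simp
  ultimately have "s' = s''"
    using bij_betw_imp_inj_on[OF bij_betw_count_ge[OF assms(1)]] s'(1) s''(1)
    by (metis inj_onD)
  then show ?thesis using s' s'' by (intro bexI[of _ s']) auto
qed

lemma word_frob_eq_imp_peak:
  assumes "word_frob a b D = word_frob a b D'" "s \<in> peaks (a + b) D"
  shows "s \<in> peaks (a + b) D' \<and> downs D' s = downs D s"
proof -
  have "(\<lambda>s. ups D s - 1) ` peaks (a + b) D = (\<lambda>s. ups D' s - 1) ` peaks (a + b) D'"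
    and "downs D ` peaks (a + b) D = downs D' ` peaks (a + b) D'"
    using assms(1) unfolding word_frob_def by auto
  then have "\<exists>s'\<in>peaks (a + b) D'. ups D s - 1 = ups D' s' - 1 \<and> downs D s = downs D' s'"
    by (intro strict_mono_images_match[OF finite_peaks strict_mono_on_ups_peaks
          strict_mono_on_downs_peaks strict_mono_on_ups_peaks strict_mono_on_downs_peaks
          _ _ assms(2)])
  then obtain s' where s': "s' \<in> peaks (a + b) D'"
    "ups D s - 1 = ups D' s' - 1" "downs D s = downs D' s'"
    by blast
  then have "ups D s = ups D' s'"
    using ups_pos_at_peak[OF assms(2)] ups_pos_at_peak[OF s'(1)] by simp
  then have "s' = s" using s'(3) downs_add_ups[of D s] downs_add_ups[of D' s'] by simp
  then show ?thesis using s' by simp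
qed

text \<open>If two words first differ at \<open>j \<in> D - D'\<close>, then at the first peak of \<open>D'\<close> after \<open>j\<close> there
  have been fewer down-steps in \<open>D'\<close> than in \<open>D\<close>.\<close>

lemma first_difference_contra:
  assumes "D \<in> words a b" "D' \<in> words a b" "j \<in> D" "j \<notin> D'" "\<And>i. i < j \<Longrightarrow> i \<in> D \<longleftrightarrow> i \<in> D'"
    and peak_downs: "\<And>s. s \<in> peaks (a + b) D' \<Longrightarrow> downs D s = downs D' s"
  shows False
proof -
  let ?n = "a + b"
  have D: "D \<subseteq> {1..?n}" "card D = a" and D': "D' \<subseteq> {1..?n}" "card D' = a"
    using assms(1,2) unfolding words_def by auto
  obtain p where j: "j = Suc p" "j \<le> ?n" using assms(3) D(1) by (cases j) auto
  have downs_j: "downs D j = Suc (downs D' j)"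
    using downs_eq_if_prefix_eq[of p D D'] assms(3-5) downs_Suc[of D p] downs_Suc[of D' p] j(1)
    by simp
  have "downs D' j < downs D' ?n"
    using downs_j downs_mono[OF j(2), of D] downs_full[OF D(1)] downs_full[OF D'(1)] D(2) D'(2)
    by simp
  then have "D' \<inter> {j<..?n} \<noteq> {}" using downs_split[OF j(2), of D'] by auto
  moreover define j' where "j' = Min (D' \<inter> {j<..?n})"
  ultimately have j': "j' \<in> D'" "j < j'" "j' \<le> ?n"
    using Min_in[of "D' \<inter> {j<..?n}"] by auto
  have j'_min: "j' \<le> x" if "x \<in> D'" "j < x" for x
    using that D'(1) Min_le[of "D' \<inter> {j<..?n}" x] unfolding j'_def by auto
  obtain s where s: "j' = Suc s" "j \<le> s" using j'(2) by (cases j') auto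
  have no_downs: "x \<notin> D'" if "j \<le> x" "x \<le> s" for x
    using that j'_min[of x] assms(4) s(1) by (cases "x = j") auto
  have "s \<in> peaks ?n D'"
    using s j j'(1,3) no_downs[of s] unfolding peaks_def by simp
  moreover have "downs D' s = downs D' j"
    using no_downs s(2) by (intro downs_eq_if_no_downs) auto
  moreover have "downs D j \<le> downs D s" using s(2) by (rule downs_mono)
  ultimately show False using peak_downs downs_j by fastforce
qed

lemma word_frob_inj:
  assumes "D \<in> words a b" "D' \<in> words a b" "word_frob a b D = word_frob a b D'"
  shows "D = D'"
proof (rule ccontr)
  assume "D \<noteq> D'"
  then have ex: "\<exists>j. (j \<in> D) \<noteq> (j \<in> D')" by blast
  define j where "j = (LEAST j. (j \<in> D) \<noteq> (j \<in> D'))"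
  have differ: "(j \<in> D) \<noteq> (j \<in> D')" using LeastI_ex[OF ex] unfolding j_def .
  have agree: "\<And>i. i < j \<Longrightarrow> i \<in> D \<longleftrightarrow> i \<in> D'" using not_less_Least unfolding j_def by blast
  have "downs D s = downs D' s" if "s \<in> peaks (a + b) D'" for s
    using word_frob_eq_imp_peak[OF assms(3)[symmetric] that] by simp
  moreover have "downs D' s = downs D s" if "s \<in> peaks (a + b) D" for s
    using word_frob_eq_imp_peak[OF assms(3) that] by simp
  ultimately show False
    using first_difference_contra[OF assms(1,2) _ _ agree] agree
      first_difference_contra[OF assms(2,1), of j] differ by blast
qed

lemma bij_betw_word_frob: "bij_betw (word_frob a b) (words a b) (frob_pairs a b)"
proof -
  have inj: "inj_on (word_frob a b) (words a b)"
    using word_frob_inj by (intro inj_onI)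
  moreover have "finite (frob_pairs a b)"
    by (rule finite_subset[of _ "Pow {..<b} \<times> Pow {..<a}"]) (auto simp: frob_pairs_def)
  moreover have "card (word_frob a b ` words a b) = card (frob_pairs a b)"
    using inj card_words card_frob_pairs by (simp add: card_image)
  moreover have "word_frob a b ` words a b \<subseteq> frob_pairs a b"
    using word_frob_in_frob_pairs by blast
  ultimately show ?thesis by (simp add: bij_betw_def card_subset_eq)
qed

section \<open>The word of a 321-avoiding involution\<close>

definition openers :: "nat \<Rightarrow> (nat \<Rightarrow> nat) \<Rightarrow> nat set" where
  "openers n p = {i \<in> {1..n}. i < p i}"

definition closers :: "nat \<Rightarrow> (nat \<Rightarrow> nat) \<Rightarrow> nat set" where
  "closers n p = {i \<in> {1..n}. p i < i}"

definition fixpts :: "nat \<Rightarrow> (nat \<Rightarrow> nat) \<Rightarrow> nat set" where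
  "fixpts n p = {i \<in> {1..n}. p i = i}"

lemma fp_eq_card_fixpts: "fp n p = card (fixpts n p)"
  unfolding fp_def fixpts_def by simp

text \<open>A 321-avoiding involution as an arc diagram: no two arcs nest and no fixed point lies
  below an arc.\<close>

locale nonnesting_involution =
  fixes n :: nat and p :: "nat \<Rightarrow> nat"
  assumes permutes: "p permutes {1..n}"
    and involution: "\<And>x. p (p x) = x"
    and nonnesting: "\<And>i j. i \<in> openers n p \<Longrightarrow> j \<in> openers n p \<Longrightarrow> i < j \<Longrightarrow> p i < p j"
    and no_fixpt_below_arc:
      "\<And>i f. i \<in> openers n p \<Longrightarrow> f \<in> fixpts n p \<Longrightarrow> i < f \<Longrightarrow> f < p i \<Longrightarrow> False"
begin

lemma in_range: "x \<in> {1..n} \<Longrightarrow> p x \<in> {1..n}"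
  using permutes_in_image[OF permutes] by simp

lemma outside_range: "x \<notin> {1..n} \<Longrightarrow> p x = x"
  using permutes_not_in[OF permutes] by simp

lemma inj_eq: "p x = p y \<longleftrightarrow> x = y"
  using involution by metis

lemma opener_imp_closer: "i \<in> openers n p \<Longrightarrow> p i \<in> closers n p"
  using in_range involution unfolding openers_def closers_def by auto

lemma closer_imp_opener: "c \<in> closers n p \<Longrightarrow> p c \<in> openers n p"
  using in_range involution unfolding openers_def closers_def by auto

lemma openers_closers_fixpts_cases:
  assumes "x \<in> {1..n}"
  obtains "x \<in> openers n p" | "x \<in> closers n p" | "x \<in> fixpts n p"
  using assms unfolding openers_def closers_def fixpts_def
  by (cases "x < p x"; cases "p x < x") auto

lemma finite_openers: "finite (openers n p)"
  and finite_closers: "finite (closers n p)"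
  and finite_fixpts: "finite (fixpts n p)"
  unfolding openers_def closers_def fixpts_def by auto

lemma closers_nonnesting:
  assumes "i \<in> closers n p" "j \<in> closers n p" "i < j"
  shows "p i < p j"
proof (rule ccontr)
  assume "\<not> p i < p j"
  moreover have "p i \<noteq> p j" using assms(3) inj_eq by simp
  ultimately have "p j < p i" by simp
  then have "p (p j) < p (p i)"
    using nonnesting[OF closer_imp_opener[OF assms(2)] closer_imp_opener[OF assms(1)]] by blast
  then show False using assms(3) involution by simp
qed

lemma opener_not_before_fixpt: "i \<in> openers n p \<Longrightarrow> Suc i \<notin> fixpts n p"
proof
  assume i: "i \<in> openers n p" and f: "Suc i \<in> fixpts n p"
  then have "p (Suc i) = Suc i" unfolding fixpts_def by simp
  then have "p i \<noteq> Suc i" using involution[of i] by auto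
  then have "Suc i < p i" using i unfolding openers_def by auto
  then show False using no_fixpt_below_arc[OF i f] by simp
qed

lemma closer_not_after_fixpt: "i \<in> fixpts n p \<Longrightarrow> Suc i \<notin> closers n p"
proof
  assume i: "i \<in> fixpts n p" and c: "Suc i \<in> closers n p"
  moreover have "p i = i" using i unfolding fixpts_def by simp
  then have "p (Suc i) \<noteq> i" using involution[of "Suc i"] by auto
  ultimately have "p (Suc i) < i" unfolding closers_def by auto
  then show False
    using no_fixpt_below_arc[OF closer_imp_opener[OF c] i] involution by simp
qed

lemma bij_betw_openers_closers: "bij_betw p (openers n p) (closers n p)"
proof -
  have "p ` openers n p = closers n p"
  proof (intro equalityI subsetI)
    fix y
    assume "y \<in> closers n p"
    then show "y \<in> p ` openers n p" using closer_imp_opener involution by (metis imageI)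
  qed (use opener_imp_closer in auto)
  moreover have "inj_on p (openers n p)" using inj_eq by (auto simp: inj_on_def)
  ultimately show ?thesis unfolding bij_betw_def by simp
qed

lemma card_openers_eq: "card (openers n p) = card (closers n p)"
  using bij_betw_openers_closers by (rule bij_betw_same_card)

lemma card_openers_closers_fixpts: "card (openers n p) + card (closers n p) + card (fixpts n p) = n"
proof -
  have "{1..n} = openers n p \<union> closers n p \<union> fixpts n p"
    unfolding openers_def closers_def fixpts_def by auto
  moreover have "openers n p \<inter> closers n p = {}" "(openers n p \<union> closers n p) \<inter> fixpts n p = {}"
    unfolding openers_def closers_def fixpts_def by auto
  ultimately have "card {1..n} = card (openers n p) + card (closers n p) + card (fixpts n p)"
    using finite_openers finite_closers finite_fixpts by (simp add: card_Un_disjoint)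
  then show ?thesis by simp
qed

lemma card_fixpts: "card (fixpts n p) = n - 2 * card (closers n p)"
  using card_openers_closers_fixpts card_openers_eq by simp

lemma descent_iff:
  assumes "1 \<le> i" "i < n"
  shows "p (Suc i) < p i \<longleftrightarrow> i \<in> openers n p \<and> Suc i \<in> closers n p"
proof
  assume descent: "p (Suc i) < p i"
  have i: "i \<in> {1..n}" and Suc_i: "Suc i \<in> {1..n}" using assms by simp_all
  from i show "i \<in> openers n p \<and> Suc i \<in> closers n p"
  proof (cases rule: openers_closers_fixpts_cases)
    case 1
    from Suc_i show ?thesis
      using descent nonnesting[OF 1, of "Suc i"] opener_not_before_fixpt[OF 1]
      by (cases rule: openers_closers_fixpts_cases) (auto simp: 1)
  next
    case 2
    then have "Suc i \<in> closers n p" using descent Suc_i unfolding closers_def by auto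
    then show ?thesis using closers_nonnesting[OF 2] descent by force
  next
    case 3
    then have "Suc i \<in> closers n p" using descent Suc_i unfolding closers_def fixpts_def by auto
    then show ?thesis using closer_not_after_fixpt[OF 3] by simp
  qed
qed (auto simp: openers_def closers_def)

end

lemma inv321_imp_nonnesting_involution:
  assumes "p \<in> inv321 n"
  shows "nonnesting_involution n p"
proof -
  have perm: "p permutes {1..n}" and "p \<circ> p = id"
    using assms unfolding inv321_def by auto
  then have invol: "p (p x) = x" for x by (metis comp_apply id_apply)
  have range: "x \<in> {1..n} \<Longrightarrow> p x \<in> {1..n}" for x
    using permutes_in_image[OF perm] by simp
  have no321: "\<And>i j k. 1 \<le> i \<Longrightarrow> i < j \<Longrightarrow> j < k \<Longrightarrow> k \<le> n \<Longrightarrow> p j < p i \<Longrightarrow> p k < p j \<Longrightarrow> False"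
    using assms unfolding inv321_def avoids321_def by blast
  show ?thesis
  proof (unfold_locales)
    fix i j
    assume i: "i \<in> openers n p" and j: "j \<in> openers n p" and "i < j"
    then have "p i \<noteq> p j" using invol by (metis less_irrefl)
    moreover have "\<not> p j < p i"
      using no321[of i j "p j"] i j range[of j] \<open>i < j\<close> invol[of j] unfolding openers_def by auto
    ultimately show "p i < p j" by simp
  next
    fix i f
    assume "i \<in> openers n p" "f \<in> fixpts n p" "i < f" "f < p i"
    then show False
      using no321[of i f "p i"] range[of i] invol[of i] unfolding openers_def fixpts_def by auto
  qed (use perm invol in auto)
qed

lemma (in nonnesting_involution) avoids321: "avoids321 p n"
proof -
  have False if ijk: "1 \<le> i" "i < j" "j < k" "k \<le> n" "p j < p i" "p k < p j" for i j k
  proof -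
    have j: "j \<in> {1..n}" using ijk by simp
    then show False
    proof (cases rule: openers_closers_fixpts_cases)
      case 1
      moreover have "i \<in> openers n p" using ijk 1 unfolding openers_def by auto
      ultimately show False using nonnesting[of i j] ijk by simp
    next
      case 2
      moreover have "k \<in> closers n p" using ijk 2 unfolding closers_def by auto
      ultimately show False using closers_nonnesting[of j k] ijk by simp
    next
      case 3
      moreover have "i \<in> openers n p" using ijk 3 unfolding openers_def fixpts_def by auto
      ultimately show False using no_fixpt_below_arc[of i j] ijk unfolding fixpts_def by auto
    qed
  qed
  then show ?thesis unfolding avoids321_def by blast
qed

definition low_fixpts :: "nat \<Rightarrow> nat \<Rightarrow> (nat \<Rightarrow> nat) \<Rightarrow> nat set" where
  "low_fixpts a n p = {f \<in> fixpts n p. count_le (fixpts n p) f \<le> a - card (closers n p)}"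

definition inv_word :: "nat \<Rightarrow> nat \<Rightarrow> (nat \<Rightarrow> nat) \<Rightarrow> nat set" where
  "inv_word a n p = closers n p \<union> low_fixpts a n p"

context nonnesting_involution
begin

abbreviation high_fixpts :: "nat \<Rightarrow> nat set" where
  "high_fixpts a \<equiv> fixpts n p - low_fixpts a n p"

lemma low_fixpts_subset: "low_fixpts a n p \<subseteq> fixpts n p"
  unfolding low_fixpts_def by auto

lemma closers_low_fixpts_disjoint: "closers n p \<inter> low_fixpts a n p = {}"
  unfolding low_fixpts_def closers_def fixpts_def by auto

lemma low_fixpts_less_high:
  assumes "f \<in> low_fixpts a n p" "g \<in> high_fixpts a"
  shows "f < g"
proof -
  have "count_le (fixpts n p) f < count_le (fixpts n p) g"
    using assms unfolding low_fixpts_def by auto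
  then show ?thesis
    using count_le_mono[OF finite_fixpts, of g f] by (meson not_le)
qed

lemma Des_eq_peaks_inv_word: "Des n p = peaks n (inv_word a n p)"
proof -
  have "i \<in> openers n p \<and> Suc i \<in> closers n p \<longleftrightarrow> i \<notin> inv_word a n p \<and> Suc i \<in> inv_word a n p"
    if i: "1 \<le> i" "i < n" for i
  proof
    assume arc: "i \<in> openers n p \<and> Suc i \<in> closers n p"
    then have "i \<notin> fixpts n p" "i \<notin> closers n p"
      unfolding openers_def closers_def fixpts_def by auto
    then show "i \<notin> inv_word a n p \<and> Suc i \<in> inv_word a n p"
      using arc low_fixpts_subset[of a] unfolding inv_word_def by auto
  next
    assume word: "i \<notin> inv_word a n p \<and> Suc i \<in> inv_word a n p"
    have "i \<in> {1..n}" using i by simp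
    then show "i \<in> openers n p \<and> Suc i \<in> closers n p"
    proof (cases rule: openers_closers_fixpts_cases)
      case 1
      then have "Suc i \<notin> low_fixpts a n p"
        using opener_not_before_fixpt low_fixpts_subset by blast
      then show ?thesis using 1 word unfolding inv_word_def by simp
    next
      case 3
      then have "i \<in> high_fixpts a" using word unfolding inv_word_def by simp
      then show ?thesis using word closer_not_after_fixpt[OF 3] low_fixpts_less_high[of "Suc i" a i]
        unfolding inv_word_def by auto
    qed (use word in \<open>simp add: inv_word_def\<close>)
  qed
  then show ?thesis unfolding Des_def peaks_def using descent_iff by auto
qed

lemma card_low_fixpts:
  assumes "a - card (closers n p) \<le> card (fixpts n p)"
  shows "card (low_fixpts a n p) = a - card (closers n p)"
proof -
  let ?t = "a - card (closers n p)"
  have bij: "bij_betw (count_le (fixpts n p)) (fixpts n p) {1..card (fixpts n p)}"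
    by (rule bij_betw_count_le[OF finite_fixpts])
  have "count_le (fixpts n p) ` low_fixpts a n p = {r \<in> count_le (fixpts n p) ` fixpts n p. r \<le> ?t}"
    unfolding low_fixpts_def by blast
  also have "\<dots> = {1..?t}"
    using bij assms unfolding bij_betw_def by auto
  finally have "count_le (fixpts n p) ` low_fixpts a n p = {1..?t}" .
  moreover have "inj_on (count_le (fixpts n p)) (low_fixpts a n p)"
    using bij low_fixpts_subset unfolding bij_betw_def by (auto intro: inj_on_subset)
  ultimately show ?thesis using card_image by fastforce
qed

end

definition inv321_fp :: "nat \<Rightarrow> nat \<Rightarrow> (nat \<Rightarrow> nat) set" where
  "inv321_fp a b = {p \<in> inv321 (a + b). b - a \<le> fp (a + b) p}"

lemma inv321_fp_imp_nonnesting_involution: "p \<in> inv321_fp a b \<Longrightarrow> nonnesting_involution (a + b) p"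
  unfolding inv321_fp_def using inv321_imp_nonnesting_involution by blast

lemma card_closers_le:
  assumes "a \<le> b" "p \<in> inv321_fp a b"
  shows "card (closers (a + b) p) \<le> a"
proof -
  interpret nonnesting_involution "a + b" p
    using inv321_fp_imp_nonnesting_involution[OF assms(2)] .
  have "b - a \<le> card (fixpts (a + b) p)"
    using assms(2) fp_eq_card_fixpts unfolding inv321_fp_def by simp
  moreover have "2 * card (closers (a + b) p) \<le> a + b"
    using card_openers_closers_fixpts card_openers_eq by simp
  ultimately show ?thesis using card_fixpts assms(1) by simp
qed

lemma inv_word_in_words:
  assumes "a \<le> b" "p \<in> inv321_fp a b"
  shows "inv_word a (a + b) p \<in> words a b"
proof -
  interpret nonnesting_involution "a + b" p
    using inv321_fp_imp_nonnesting_involution[OF assms(2)] .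
  have closers: "card (closers (a + b) p) \<le> a" by (rule card_closers_le[OF assms])
  then have "card (low_fixpts a (a + b) p) = a - card (closers (a + b) p)"
    using card_fixpts assms(1) by (intro card_low_fixpts) simp
  then have "card (inv_word a (a + b) p) = a"
    unfolding inv_word_def using closers closers_low_fixpts_disjoint finite_closers finite_fixpts
      finite_subset[OF low_fixpts_subset] by (simp add: card_Un_disjoint)
  moreover have "inv_word a (a + b) p \<subseteq> {1..a + b}"
    unfolding inv_word_def using low_fixpts_subset[of a] unfolding closers_def fixpts_def by auto
  ultimately show ?thesis unfolding words_def by simp
qed

section \<open>Recovering the involution from its word\<close>

definition height :: "nat set \<Rightarrow> nat \<Rightarrow> int" where
  "height D q = int (ups D q) - int (downs D q)"

text \<open>Reading \<open>D\<close> as a bracket word with up-steps as opening brackets, these are its unmatched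
  closing and opening brackets.\<close>

definition unmatched_downs :: "nat set \<Rightarrow> nat set" where
  "unmatched_downs D = {x \<in> D. \<forall>q<x. height D x < height D q}"

definition unmatched_ups :: "nat \<Rightarrow> nat set \<Rightarrow> nat set" where
  "unmatched_ups n D = {x \<in> {1..n} - D. \<forall>q. x \<le> q \<and> q \<le> n \<longrightarrow> height D x \<le> height D q}"

definition matched_ups :: "nat \<Rightarrow> nat set \<Rightarrow> nat set" where
  "matched_ups n D = {1..n} - D - unmatched_ups n D"

definition matched_downs :: "nat set \<Rightarrow> nat set" where
  "matched_downs D = D - unmatched_downs D"

definition arcs_over :: "nat \<Rightarrow> (nat \<Rightarrow> nat) \<Rightarrow> nat \<Rightarrow> nat" where
  "arcs_over n p q = card {i \<in> openers n p. i \<le> q \<and> q < p i}"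

lemma downs_Un: "A \<inter> B = {} \<Longrightarrow> downs (A \<union> B) q = downs A q + downs B q"
  unfolding downs_def by (simp add: Int_Un_distrib2 card_Un_disjoint disjoint_iff)

lemma height_Suc: "height D (Suc q) = height D q + (if Suc q \<in> D then -1 else 1)"
  unfolding height_def using downs_Suc[of D q] ups_Suc[of D q] by auto

lemma height_0 [simp]: "height D 0 = 0"
  unfolding height_def downs_def ups_def by simp

context nonnesting_involution
begin

lemma downs_openers: "downs (openers n p) q = downs (closers n p) q + arcs_over n p q"
proof -
  have split: "openers n p \<inter> {1..q}
      = {i \<in> openers n p. p i \<le> q} \<union> {i \<in> openers n p. i \<le> q \<and> q < p i}"
    unfolding openers_def by auto
  have closed: "closers n p \<inter> {1..q} = p ` {i \<in> openers n p. p i \<le> q}"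
  proof (intro equalityI subsetI)
    fix c
    assume c: "c \<in> closers n p \<inter> {1..q}"
    then have "p c \<in> openers n p" "p (p c) = c" using closer_imp_opener involution by auto
    then show "c \<in> p ` {i \<in> openers n p. p i \<le> q}" using c by (intro image_eqI[where x="p c"]) auto
  next
    fix c
    assume "c \<in> p ` {i \<in> openers n p. p i \<le> q}"
    then show "c \<in> closers n p \<inter> {1..q}"
      using opener_imp_closer unfolding closers_def by auto
  qed
  have "card (p ` {i \<in> openers n p. p i \<le> q}) = card {i \<in> openers n p. p i \<le> q}"
    using inj_eq by (intro card_image) (auto simp: inj_on_def)
  then show ?thesis
    unfolding downs_def arcs_over_def split closed using finite_openers
    by (subst card_Un_disjoint) auto
qed

lemma arcs_over_eq_0_iff: "arcs_over n p q = 0 \<longleftrightarrow> (\<forall>i\<in>openers n p. q < i \<or> p i \<le> q)"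
  unfolding arcs_over_def using finite_openers by (auto simp: not_le)

lemma arcs_over_fixpt: "f \<in> fixpts n p \<Longrightarrow> arcs_over n p f = 0"
  unfolding arcs_over_eq_0_iff
proof
  fix i
  assume f: "f \<in> fixpts n p" and i: "i \<in> openers n p"
  then have "i \<noteq> f" unfolding fixpts_def openers_def by auto
  then show "f < i \<or> p i \<le> f"
    using no_fixpt_below_arc[OF i f] by (cases "i < f"; cases "f < p i") auto
qed

lemma arcs_over_before_fixpt: "f \<in> fixpts n p \<Longrightarrow> arcs_over n p (f - 1) = 0"
  unfolding arcs_over_eq_0_iff
proof
  fix i
  assume f: "f \<in> fixpts n p" and i: "i \<in> openers n p"
  then have "1 \<le> f" "p f = f" "i \<noteq> f" "p i \<noteq> f"
    using involution unfolding fixpts_def openers_def by force+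
  then show "f - 1 < i \<or> p i \<le> f - 1"
    using no_fixpt_below_arc[OF i f] by (cases "i < f"; cases "f < p i") auto
qed

lemma arcs_over_0: "arcs_over n p 0 = 0"
  unfolding arcs_over_eq_0_iff openers_def by auto

lemma arcs_over_n: "arcs_over n p n = 0"
  unfolding arcs_over_eq_0_iff
proof
  fix i
  assume "i \<in> openers n p"
  then show "n < i \<or> p i \<le> n" using in_range[of i] unfolding openers_def by simp
qed

lemma arcs_over_opener:
  assumes "x \<in> openers n p"
  shows "1 \<le> arcs_over n p x"
proof -
  have "arcs_over n p x \<noteq> 0"
    using assms arcs_over_eq_0_iff[of x] unfolding openers_def by auto
  then show ?thesis by simp
qed

lemma height_inv_word:
  assumes "q \<le> n"
  shows "height (inv_word a n p) q
       = int (arcs_over n p q) + int (downs (high_fixpts a) q) - int (downs (low_fixpts a n p) q)"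
proof -
  have "downs (inv_word a n p) q = downs (closers n p) q + downs (low_fixpts a n p) q"
    unfolding inv_word_def using closers_low_fixpts_disjoint by (rule downs_Un)
  moreover have "{1..q} - inv_word a n p = (openers n p \<inter> {1..q}) \<union> (high_fixpts a \<inter> {1..q})"
    using assms low_fixpts_subset[of a]
    unfolding inv_word_def openers_def closers_def fixpts_def by auto
  then have "ups (inv_word a n p) q = downs (openers n p) q + downs (high_fixpts a) q"
    unfolding ups_def downs_def
    by (simp add: card_Un_disjoint disjoint_iff openers_def fixpts_def)
  ultimately show ?thesis unfolding height_def downs_openers by simp
qed

lemma downs_fixpts_const:
  assumes "q \<le> x" "\<And>z. q < z \<Longrightarrow> z \<le> x \<Longrightarrow> z \<notin> fixpts n p"
  shows "downs (high_fixpts a) x = downs (high_fixpts a) q"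
    and "downs (low_fixpts a n p) x = downs (low_fixpts a n p) q"
  using assms low_fixpts_subset[of a] by (auto intro!: downs_eq_if_no_downs)

lemma exists_earlier_height_le:
  assumes "x \<in> {1..n}" "x \<notin> fixpts n p"
  shows "\<exists>q<x. height (inv_word a n p) q \<le> height (inv_word a n p) x"
proof -
  let ?F = "fixpts n p \<inter> {..<x}"
  obtain q where q: "q < x" "arcs_over n p q = 0" "\<And>z. q < z \<Longrightarrow> z < x \<Longrightarrow> z \<notin> fixpts n p"
  proof (cases "?F = {}")
    case True
    then show thesis using that[of 0] assms(1) arcs_over_0 by auto
  next
    case False
    then have "Max ?F \<in> ?F" by (intro Max_in) auto
    moreover have "z \<le> Max ?F" if "z \<in> ?F" for z using that by (intro Max_ge) auto
    ultimately show thesis using that[of "Max ?F"] arcs_over_fixpt by fastforce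
  qed
  then have "z \<notin> fixpts n p" if "q < z" "z \<le> x" for z
    using that assms(2) by (cases "z = x") auto
  then show ?thesis
    using height_inv_word[of x a] height_inv_word[of q a] downs_fixpts_const[of q x a] assms(1) q
    by (intro exI[of _ q]) auto
qed

lemma exists_later_height_less:
  assumes "x \<in> openers n p"
  shows "\<exists>q. x \<le> q \<and> q \<le> n \<and> height (inv_word a n p) q < height (inv_word a n p) x"
proof -
  let ?F = "{f \<in> fixpts n p. x < f}"
  have x: "x \<in> {1..n}" using assms unfolding openers_def by simp
  obtain q where q: "x \<le> q" "q \<le> n" "arcs_over n p q = 0"
    "\<And>z. x < z \<Longrightarrow> z \<le> q \<Longrightarrow> z \<notin> fixpts n p"
  proof (cases "?F = {}")
    case True
    then show thesis using that[of n] x arcs_over_n by auto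
  next
    case False
    moreover have fin: "finite ?F" using finite_fixpts by simp
    ultimately have "Min ?F \<in> ?F" by (intro Min_in)
    moreover have "Min ?F \<le> z" if "z \<in> ?F" for z using fin that by (intro Min_le)
    moreover have "Min ?F \<le> n" using \<open>Min ?F \<in> ?F\<close> unfolding fixpts_def by simp
    ultimately show thesis
      using that[of "Min ?F - 1"] arcs_over_before_fixpt[of "Min ?F"] by fastforce
  qed
  then show ?thesis
    using height_inv_word[of x a] height_inv_word[of q a] downs_fixpts_const[of x q a]
      arcs_over_opener[OF assms] x
    by (intro exI[of _ q]) auto
qed

lemma unmatched_downs_inv_word: "unmatched_downs (inv_word a n p) = low_fixpts a n p"
proof (intro equalityI subsetI)
  fix x
  assume x: "x \<in> unmatched_downs (inv_word a n p)"
  show "x \<in> low_fixpts a n p"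
  proof (rule ccontr)
    assume "x \<notin> low_fixpts a n p"
    then have "x \<in> closers n p" using x unfolding unmatched_downs_def inv_word_def by simp
    then have "x \<in> {1..n}" "x \<notin> fixpts n p" unfolding closers_def fixpts_def by auto
    then show False
      using exists_earlier_height_le[of x a] x unfolding unmatched_downs_def by force
  qed
next
  fix f
  assume f: "f \<in> low_fixpts a n p"
  then have f_range: "f \<le> n" using low_fixpts_subset unfolding fixpts_def by auto
  have "downs (high_fixpts a) f = 0"
    using low_fixpts_less_high[OF f] unfolding downs_def by fastforce
  then have "height (inv_word a n p) f = - int (downs (low_fixpts a n p) f)"
    using height_inv_word[OF f_range] arcs_over_fixpt f low_fixpts_subset by auto
  moreover have "- int (downs (low_fixpts a n p) f) < height (inv_word a n p) q" if "q < f" for q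
  proof -
    have "downs (low_fixpts a n p) q < downs (low_fixpts a n p) f"
      using that f by (rule downs_less_downs_mem)
    moreover have "q \<le> n" using that f_range by simp
    ultimately show ?thesis using height_inv_word[of q a] by simp
  qed
  ultimately have "height (inv_word a n p) f < height (inv_word a n p) q" if "q < f" for q
    using that by simp
  then show "f \<in> unmatched_downs (inv_word a n p)"
    using f unfolding unmatched_downs_def inv_word_def by auto
qed

lemma unmatched_ups_inv_word: "unmatched_ups n (inv_word a n p) = high_fixpts a"
proof (intro equalityI subsetI)
  fix x
  assume x: "x \<in> unmatched_ups n (inv_word a n p)"
  show "x \<in> high_fixpts a"
  proof (rule ccontr)
    assume "x \<notin> high_fixpts a"
    then have "x \<in> openers n p"
      using x openers_closers_fixpts_cases[of x] unfolding unmatched_ups_def inv_word_def by auto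
    then show False
      using exists_later_height_less[of x a] x unfolding unmatched_ups_def by force
  qed
next
  fix g
  assume g: "g \<in> high_fixpts a"
  then have g_range: "g \<in> {1..n}" unfolding fixpts_def by auto
  have "height (inv_word a n p) g \<le> height (inv_word a n p) q" if "g \<le> q" "q \<le> n" for q
  proof -
    have "downs (low_fixpts a n p) q = downs (low_fixpts a n p) g"
      using that low_fixpts_less_high[OF _ g] by (intro downs_eq_if_no_downs) force+
    moreover have "downs (high_fixpts a) g \<le> downs (high_fixpts a) q"
      using that(1) by (rule downs_mono)
    ultimately show ?thesis
      using height_inv_word[of q a] height_inv_word[of g a] that g_range arcs_over_fixpt[of g] g
      by simp
  qed
  moreover have "g \<notin> inv_word a n p"
    using g unfolding inv_word_def closers_def fixpts_def by auto
  ultimately show "g \<in> unmatched_ups n (inv_word a n p)"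
    using g_range unfolding unmatched_ups_def by auto
qed

lemma closers_eq_matched_downs: "closers n p = matched_downs (inv_word a n p)"
  using unmatched_downs_inv_word[of a] closers_low_fixpts_disjoint[of a]
  unfolding matched_downs_def inv_word_def by auto

lemma openers_eq_matched_ups: "openers n p = matched_ups n (inv_word a n p)"
  using unmatched_ups_inv_word[of a] openers_closers_fixpts_cases low_fixpts_subset[of a]
  unfolding matched_ups_def inv_word_def by (auto simp: openers_def closers_def fixpts_def)

text \<open>Non-nesting means that the \<open>k\<close>-th opener is joined to the \<open>k\<close>-th closer.\<close>

lemma count_le_closers_image:
  assumes "x \<in> openers n p"
  shows "count_le (closers n p) (p x) = count_le (openers n p) x"
proof -
  have "{c \<in> closers n p. c \<le> p x} = p ` {y \<in> openers n p. y \<le> x}"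
  proof (intro equalityI subsetI)
    fix c
    assume c: "c \<in> {c \<in> closers n p. c \<le> p x}"
    then have pc: "p c \<in> openers n p" "p (p c) = c" using closer_imp_opener involution by auto
    have "p c \<le> x"
      using nonnesting[OF assms pc(1)] c pc(2) by (cases "x < p c") auto
    then show "c \<in> p ` {y \<in> openers n p. y \<le> x}" using pc by (intro image_eqI[where x="p c"]) auto
  next
    fix c
    assume "c \<in> p ` {y \<in> openers n p. y \<le> x}"
    then obtain y where y: "y \<in> openers n p" "y \<le> x" "c = p y" by auto
    then have "p y \<le> p x" using nonnesting[OF y(1) assms] by (cases "y = x") auto
    then show "c \<in> {c \<in> closers n p. c \<le> p x}" using opener_imp_closer[OF y(1)] y by simp
  qed
  moreover have "inj_on p {y \<in> openers n p. y \<le> x}" using inj_eq by (auto simp: inj_on_def)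
  ultimately show ?thesis unfolding count_le_def by (simp add: card_image)
qed

end

lemma nonnesting_involution_eqI:
  assumes "nonnesting_involution n p" "nonnesting_involution n p'"
    and openers: "openers n p = openers n p'" and closers: "closers n p = closers n p'"
  shows "p = p'"
proof (rule ext)
  interpret P: nonnesting_involution n p by (rule assms(1))
  interpret P': nonnesting_involution n p' by (rule assms(2))
  have on_openers: "p x = p' x" if x: "x \<in> openers n p" for x
  proof -
    have "count_le (closers n p) (p x) = count_le (closers n p) (p' x)"
      using P.count_le_closers_image[OF x] P'.count_le_closers_image x openers closers by simp
    moreover have "p x \<in> closers n p" "p' x \<in> closers n p"
      using P.opener_imp_closer[OF x] P'.opener_imp_closer x openers closers by auto
    ultimately have "p x \<le> p' x" "p' x \<le> p x"
      using count_le_le_iff[OF P.finite_closers, of "p x" "p' x"]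
        count_le_le_iff[OF P.finite_closers, of "p' x" "p x"] by simp_all
    then show ?thesis by simp
  qed
  fix x
  show "p x = p' x"
  proof (cases "x \<in> {1..n}")
    case True
    then show ?thesis
    proof (cases rule: P.openers_closers_fixpts_cases)
      case 2
      then have "p x \<in> openers n p" by (rule P.closer_imp_opener)
      then have "p' (p x) = x" using on_openers[of "p x"] P.involution[of x] by simp
      then show ?thesis using P'.involution[of "p x"] by simp
    next
      case 3
      then have "x \<notin> openers n p" "x \<notin> closers n p"
        unfolding openers_def closers_def fixpts_def by auto
      then have "x \<notin> openers n p'" "x \<notin> closers n p'" using openers closers by simp_all
      with True have "x \<in> fixpts n p'"
        by (cases rule: P'.openers_closers_fixpts_cases) simp_all
      then show ?thesis using 3 unfolding fixpts_def by simp
    qed (rule on_openers)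
  qed (simp add: P.outside_range P'.outside_range)
qed

lemma inv_word_inj:
  assumes "nonnesting_involution n p" "nonnesting_involution n p'"
    and "inv_word a n p = inv_word a n p'"
  shows "p = p'"
proof (rule nonnesting_involution_eqI[OF assms(1,2)])
  show "openers n p = openers n p'"
    using nonnesting_involution.openers_eq_matched_ups[OF assms(1), of a]
      nonnesting_involution.openers_eq_matched_ups[OF assms(2), of a] assms(3) by simp
  show "closers n p = closers n p'"
    using nonnesting_involution.closers_eq_matched_downs[OF assms(1), of a]
      nonnesting_involution.closers_eq_matched_downs[OF assms(2), of a] assms(3) by simp
qed

section \<open>From lattice paths to involutions\<close>

definition prefix_min :: "nat set \<Rightarrow> nat \<Rightarrow> int" where
  "prefix_min D q = Min (height D ` {..q})"

definition suffix_min :: "nat \<Rightarrow> nat set \<Rightarrow> nat \<Rightarrow> int" where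
  "suffix_min n D q = Min (height D ` {q..n})"

locale lattice_path =
  fixes n :: nat and D :: "nat set"
  assumes path_subset: "D \<subseteq> {1..n}"
begin

lemma finite_path: "finite D"
  using path_subset finite_subset by blast

lemma prefix_min_le: "r \<le> q \<Longrightarrow> prefix_min D q \<le> height D r"
  unfolding prefix_min_def by (intro Min_le) auto

lemma prefix_min_attained: "\<exists>r\<le>q. prefix_min D q = height D r"
proof -
  have "prefix_min D q \<in> height D ` {..q}" unfolding prefix_min_def by (intro Min_in) auto
  then show ?thesis by auto
qed

lemma prefix_min_0: "prefix_min D 0 = 0"
  unfolding prefix_min_def by simp

lemma prefix_min_Suc: "prefix_min D (Suc q) = min (prefix_min D q) (height D (Suc q))"
proof -
  have "height D ` {..Suc q} = insert (height D (Suc q)) (height D ` {..q})"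
    by (auto simp: atMost_Suc)
  then show ?thesis unfolding prefix_min_def by (simp add: Min_insert min.commute)
qed

lemma suffix_min_le: "q \<le> r \<Longrightarrow> r \<le> n \<Longrightarrow> suffix_min n D q \<le> height D r"
  unfolding suffix_min_def by (intro Min_le) auto

lemma suffix_min_n: "suffix_min n D n = height D n"
  unfolding suffix_min_def by simp

lemma suffix_min_step: "q < n \<Longrightarrow> suffix_min n D q = min (height D q) (suffix_min n D (Suc q))"
proof -
  assume "q < n"
  then have "height D ` {q..n} = insert (height D q) (height D ` {Suc q..n})"
    "{Suc q..n} \<noteq> {}"
    by (auto simp: atLeastAtMost_insertL[symmetric])
  then show ?thesis unfolding suffix_min_def by (simp add: Min_insert)
qed

lemma suffix_min_0: "q \<le> n \<Longrightarrow> suffix_min n D 0 = min (prefix_min D q) (suffix_min n D q)"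
proof -
  assume q: "q \<le> n"
  have "{0..n} = {..q} \<union> {q..n}" using q by auto
  then have "height D ` {0..n} = height D ` {..q} \<union> height D ` {q..n}" by auto
  moreover have "height D ` {..q} \<noteq> {}" "height D ` {q..n} \<noteq> {}" using q by auto
  ultimately show ?thesis unfolding suffix_min_def prefix_min_def by (simp add: Min_Un)
qed

lemma unmatched_downs_subset: "unmatched_downs D \<subseteq> D"
  unfolding unmatched_downs_def by auto

lemma unmatched_ups_subset: "unmatched_ups n D \<subseteq> {1..n} - D"
  unfolding unmatched_ups_def by auto

lemma Suc_mem_unmatched_downs_iff:
  "Suc q \<in> unmatched_downs D \<longleftrightarrow> Suc q \<in> D \<and> height D (Suc q) < prefix_min D q"
proof
  assume "Suc q \<in> unmatched_downs D"
  moreover obtain r where "r \<le> q" "prefix_min D q = height D r" using prefix_min_attained by blast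
  ultimately show "Suc q \<in> D \<and> height D (Suc q) < prefix_min D q"
    unfolding unmatched_downs_def by auto
next
  assume h: "Suc q \<in> D \<and> height D (Suc q) < prefix_min D q"
  have "height D (Suc q) < height D r" if "r < Suc q" for r
    using h prefix_min_le[of r q] that by simp
  then show "Suc q \<in> unmatched_downs D" using h unfolding unmatched_downs_def by auto
qed

lemma Suc_mem_unmatched_ups_iff:
  assumes "q < n"
  shows "Suc q \<in> unmatched_ups n D \<longleftrightarrow> Suc q \<notin> D \<and> height D (Suc q) \<le> suffix_min n D (Suc q)"
proof
  assume "Suc q \<in> unmatched_ups n D"
  moreover have "suffix_min n D (Suc q) \<in> height D ` {Suc q..n}"
    unfolding suffix_min_def using assms by (intro Min_in) auto
  ultimately show "Suc q \<notin> D \<and> height D (Suc q) \<le> suffix_min n D (Suc q)"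
    unfolding unmatched_ups_def by auto
next
  assume "Suc q \<notin> D \<and> height D (Suc q) \<le> suffix_min n D (Suc q)"
  then show "Suc q \<in> unmatched_ups n D"
    using assms suffix_min_le[of "Suc q"] unfolding unmatched_ups_def by fastforce
qed

text \<open>Each unmatched down-step lowers the running minimum of the height by one.\<close>

lemma card_unmatched_downs_prefix: "int (card (unmatched_downs D \<inter> {1..q})) = - prefix_min D q"
proof (induction q)
  case 0
  then show ?case using prefix_min_0 by simp
next
  case (Suc q)
  have fin: "finite (unmatched_downs D \<inter> {1..q})" by simp
  have min_le: "prefix_min D q \<le> height D q" using prefix_min_le by simp
  show ?case
  proof (cases "Suc q \<in> unmatched_downs D")
    case True
    then have "Suc q \<in> D" "height D (Suc q) < prefix_min D q"
      using Suc_mem_unmatched_downs_iff by auto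
    then have "height D (Suc q) = prefix_min D q - 1" using height_Suc[of D q] min_le by simp
    then have "prefix_min D (Suc q) = prefix_min D q - 1" using prefix_min_Suc by simp
    moreover have "unmatched_downs D \<inter> {1..Suc q} = insert (Suc q) (unmatched_downs D \<inter> {1..q})"
      using True by auto
    ultimately show ?thesis using Suc.IH fin by simp
  next
    case False
    then have "prefix_min D q \<le> height D (Suc q)"
      using Suc_mem_unmatched_downs_iff height_Suc[of D q] min_le by (cases "Suc q \<in> D") auto
    then have "prefix_min D (Suc q) = prefix_min D q" using prefix_min_Suc by simp
    moreover have "unmatched_downs D \<inter> {1..Suc q} = unmatched_downs D \<inter> {1..q}"
      using False by (auto simp: le_Suc_eq)
    ultimately show ?thesis using Suc.IH by simp
  qed
qed

lemma card_unmatched_ups_suffix: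
  "q \<le> n \<Longrightarrow> int (card (unmatched_ups n D \<inter> {q<..n})) = height D n - suffix_min n D q"
proof (induction "n - q" arbitrary: q)
  case 0
  then show ?case using suffix_min_n by simp
next
  case (Suc k)
  then have q: "q < n" by simp
  have IH: "int (card (unmatched_ups n D \<inter> {Suc q<..n})) = height D n - suffix_min n D (Suc q)"
    using Suc q by simp
  have fin: "finite (unmatched_ups n D \<inter> {Suc q<..n})" by simp
  have min_le: "suffix_min n D (Suc q) \<le> height D (Suc q)" using q by (intro suffix_min_le) auto
  show ?case
  proof (cases "Suc q \<in> unmatched_ups n D")
    case True
    then have "Suc q \<notin> D" "height D (Suc q) \<le> suffix_min n D (Suc q)"
      using Suc_mem_unmatched_ups_iff[OF q] by auto
    then have "height D q = suffix_min n D (Suc q) - 1" using height_Suc[of D q] min_le by simp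
    then have "suffix_min n D q = suffix_min n D (Suc q) - 1" using suffix_min_step[OF q] by simp
    moreover have "unmatched_ups n D \<inter> {q<..n} = insert (Suc q) (unmatched_ups n D \<inter> {Suc q<..n})"
      using True q by auto
    ultimately show ?thesis using IH fin by simp
  next
    case False
    then have "suffix_min n D (Suc q) \<le> height D q"
      using Suc_mem_unmatched_ups_iff[OF q] height_Suc[of D q] min_le by (cases "Suc q \<in> D") auto
    then have "suffix_min n D q = suffix_min n D (Suc q)" using suffix_min_step[OF q] by simp
    moreover have "Suc q < x" if "x \<in> unmatched_ups n D" "q < x" for x
      using that False Suc_lessI by blast
    then have "unmatched_ups n D \<inter> {q<..n} = unmatched_ups n D \<inter> {Suc q<..n}" by auto
    ultimately show ?thesis using IH by simp
  qed
qed

lemma downs_split_matched: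
  "downs (matched_downs D) q + card (unmatched_downs D \<inter> {1..q}) = downs D q"
proof -
  have "D \<inter> {1..q} = (matched_downs D \<inter> {1..q}) \<union> (unmatched_downs D \<inter> {1..q})"
    unfolding matched_downs_def using unmatched_downs_subset by auto
  then show ?thesis
    unfolding downs_def matched_downs_def by (simp add: card_Un_disjoint disjoint_iff)
qed

lemma ups_split_matched:
  "q \<le> n \<Longrightarrow> downs (matched_ups n D) q + card (unmatched_ups n D \<inter> {1..q}) = ups D q"
proof -
  assume "q \<le> n"
  then have "{1..q} - D = (matched_ups n D \<inter> {1..q}) \<union> (unmatched_ups n D \<inter> {1..q})"
    unfolding matched_ups_def using unmatched_ups_subset by auto
  then show ?thesis unfolding downs_def ups_def matched_ups_def
    by (simp add: card_Un_disjoint disjoint_iff)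
qed

lemma matched_balance:
  assumes "q \<le> n"
  shows "int (downs (matched_ups n D) q) - int (downs (matched_downs D) q)
       = height D q - max (prefix_min D q) (suffix_min n D q)"
proof -
  have "unmatched_ups n D \<inter> {0<..n} = (unmatched_ups n D \<inter> {1..q}) \<union> (unmatched_ups n D \<inter> {q<..n})"
    using assms by auto
  then have "card (unmatched_ups n D \<inter> {1..q}) + card (unmatched_ups n D \<inter> {q<..n})
      = card (unmatched_ups n D \<inter> {0<..n})"
    by (simp add: card_Un_disjoint disjoint_iff)
  moreover have "int (card (unmatched_ups n D \<inter> {0<..n})) = height D n - suffix_min n D 0"
    using card_unmatched_ups_suffix[of 0] by simp
  ultimately show ?thesis
    using downs_split_matched[of q] ups_split_matched[OF assms] card_unmatched_ups_suffix[OF assms]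
      card_unmatched_downs_prefix[of q] suffix_min_0[OF assms]
    unfolding height_def by linarith
qed

lemma downs_matched_le: "q \<le> n \<Longrightarrow> downs (matched_downs D) q \<le> downs (matched_ups n D) q"
  using matched_balance prefix_min_le[of q q] suffix_min_le[of q q] by fastforce

lemma card_matched_eq: "card (matched_ups n D) = card (matched_downs D)"
proof -
  have "int (downs (matched_ups n D) n) = int (downs (matched_downs D) n)"
    using matched_balance[of n] suffix_min_n prefix_min_le[of n n] by simp
  moreover have "matched_ups n D \<subseteq> {1..n}" "matched_downs D \<subseteq> {1..n}"
    unfolding matched_ups_def matched_downs_def using path_subset by auto
  ultimately show ?thesis by (simp add: downs_full)
qed

lemma balanced_before_unmatched_down:
  assumes "f \<in> unmatched_downs D"
  shows "downs (matched_ups n D) (f - 1) = downs (matched_downs D) (f - 1)"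
proof -
  have f: "f \<in> D" "f \<le> n" using assms unmatched_downs_subset path_subset by auto
  then obtain q where q: "f = Suc q" using path_subset by (cases f) auto
  have "height D f < prefix_min D q" using assms Suc_mem_unmatched_downs_iff q by simp
  moreover have "height D f = height D q - 1" using height_Suc[of D q] f q by simp
  ultimately show ?thesis
    using matched_balance[of q] prefix_min_le[of q q] suffix_min_le[of q q] f q by simp
qed

lemma balanced_before_unmatched_up:
  assumes "f \<in> unmatched_ups n D"
  shows "downs (matched_ups n D) (f - 1) = downs (matched_downs D) (f - 1)"
proof -
  have f: "f \<notin> D" "1 \<le> f" "f \<le> n" using assms unmatched_ups_subset by auto
  then obtain q where q: "f = Suc q" "q < n" by (cases f) auto
  have "height D f \<le> suffix_min n D f" using assms Suc_mem_unmatched_ups_iff[OF q(2)] q by simp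
  moreover have "height D f = height D q + 1" using height_Suc[of D q] f q by simp
  ultimately show ?thesis
    using matched_balance[of q] prefix_min_le[of q q] suffix_min_step[OF q(2)] q by simp
qed

lemma unmatched_downs_less_ups:
  assumes "f \<in> unmatched_downs D" "u \<in> unmatched_ups n D"
  shows "f < u"
proof (rule ccontr)
  assume "\<not> f < u"
  moreover have "u \<noteq> f" using assms unmatched_downs_subset unmatched_ups_subset by auto
  ultimately have "u < f" by simp
  moreover have "u \<notin> D" "1 \<le> u" "f \<le> n"
    using assms unmatched_downs_subset unmatched_ups_subset path_subset by auto
  moreover obtain q where q: "u = Suc q" using \<open>1 \<le> u\<close> by (cases u) auto
  ultimately have "height D u = height D q + 1" "height D u \<le> height D f" "height D f < height D q"
    using assms height_Suc[of D q] unfolding unmatched_ups_def unmatched_downs_def by auto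
  then show False by simp
qed

lemma card_unmatched_downs_add: "card (unmatched_downs D) + card (matched_downs D) = card D"
  unfolding matched_downs_def using unmatched_downs_subset finite_path
  by (metis add.commute card_Diff_subset finite_subset le_add_diff_inverse card_mono)

end

lemma count_le_eq_downs: "S \<subseteq> {1..n} \<Longrightarrow> count_le S x = downs S x"
proof -
  assume "S \<subseteq> {1..n}"
  then have "{y \<in> S. y \<le> x} = S \<inter> {1..x}" by auto
  then show ?thesis unfolding count_le_def downs_def by simp
qed

text \<open>The non-nesting matching joining the \<open>k\<close>-th element of \<open>Os\<close> with the \<open>k\<close>-th element
  of \<open>Cs\<close>.\<close>

definition rank_matching :: "nat set \<Rightarrow> nat set \<Rightarrow> nat \<Rightarrow> nat" where
  "rank_matching Os Cs x =
     (if x \<in> Os then the_inv_into Cs (count_le Cs) (count_le Os x)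
      else if x \<in> Cs then the_inv_into Os (count_le Os) (count_le Cs x) else x)"

locale ballot_pair =
  fixes n :: nat and Os Cs :: "nat set"
  assumes openers_subset: "Os \<subseteq> {1..n}" and closers_subset: "Cs \<subseteq> {1..n}"
    and disjoint: "Os \<inter> Cs = {}"
    and card_eq: "card Os = card Cs"
    and ballot: "\<And>q. q \<le> n \<Longrightarrow> downs Cs q \<le> downs Os q"
    and balanced: "\<And>f. f \<in> {1..n} - Os - Cs \<Longrightarrow> downs Os (f - 1) = downs Cs (f - 1)"
begin

abbreviation m :: "nat \<Rightarrow> nat" where
  "m \<equiv> rank_matching Os Cs"

lemma finite_openers: "finite Os"
  using openers_subset finite_subset by blast

lemma finite_closers: "finite Cs"
  using closers_subset finite_subset by blast

lemma matching_opener: "x \<in> Os \<Longrightarrow> m x \<in> Cs \<and> count_le Cs (m x) = count_le Os x"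
proof -
  assume x: "x \<in> Os"
  have bij: "bij_betw (count_le Cs) Cs {1..card Os}"
    using bij_betw_count_le[OF finite_closers] card_eq by simp
  have "count_le Os x \<in> count_le Cs ` Cs"
    using bij_betw_count_le[OF finite_openers] x bij unfolding bij_betw_def by auto
  then show ?thesis unfolding rank_matching_def using x bij_betw_imp_inj_on[OF bij]
    by (simp add: the_inv_into_into f_the_inv_into_f)
qed

lemma matching_closer: "x \<in> Cs \<Longrightarrow> m x \<in> Os \<and> count_le Os (m x) = count_le Cs x"
proof -
  assume x: "x \<in> Cs"
  have bij: "bij_betw (count_le Os) Os {1..card Cs}"
    using bij_betw_count_le[OF finite_openers] card_eq by simp
  have "count_le Cs x \<in> count_le Os ` Os"
    using bij_betw_count_le[OF finite_closers] x bij unfolding bij_betw_def by auto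
  moreover have "x \<notin> Os" using x disjoint by auto
  ultimately show ?thesis unfolding rank_matching_def using x bij_betw_imp_inj_on[OF bij]
    by (simp add: the_inv_into_into f_the_inv_into_f)
qed

lemma matching_other: "x \<notin> Os \<Longrightarrow> x \<notin> Cs \<Longrightarrow> m x = x"
  unfolding rank_matching_def by simp

lemma matching_involution: "m (m x) = x"
proof -
  have inj: "inj_on (count_le Os) Os" "inj_on (count_le Cs) Cs"
    using bij_betw_count_le[OF finite_openers] bij_betw_count_le[OF finite_closers]
    by (simp_all add: bij_betw_def)
  consider "x \<in> Os" | "x \<in> Cs" | "x \<notin> Os" "x \<notin> Cs" by blast
  then show ?thesis
  proof cases
    case 1
    then show ?thesis using matching_opener[OF 1] matching_closer[of "m x"] inj(1)
      by (metis inj_onD)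
  next
    case 2
    then show ?thesis using matching_closer[OF 2] matching_opener[of "m x"] inj(2)
      by (metis inj_onD)
  qed (simp add: matching_other)
qed

text \<open>The ballot condition forces the partner of an opener to lie to its right.\<close>

lemma opener_less_matching: "x \<in> Os \<Longrightarrow> x < m x"
proof (rule ccontr)
  assume x: "x \<in> Os" and "\<not> x < m x"
  moreover have "x \<noteq> m x" using x matching_opener[OF x] disjoint by auto
  ultimately have less: "m x < x" by simp
  have "m x \<in> Cs" "count_le Cs (m x) = count_le Os x" using matching_opener[OF x] by auto
  moreover have "count_le Os (m x) < count_le Os x" using count_le_less[OF finite_openers less x] .
  moreover have "downs Cs (m x) \<le> downs Os (m x)" using ballot \<open>m x \<in> Cs\<close> closers_subset by auto
  ultimately show False
    using count_le_eq_downs[OF openers_subset] count_le_eq_downs[OF closers_subset] by simp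
qed

lemma matching_less_closer: "x \<in> Cs \<Longrightarrow> m x < x"
  using opener_less_matching[of "m x"] matching_closer[of x] matching_involution[of x] by simp

lemma openers_rank_matching: "openers n m = Os"
  using opener_less_matching matching_less_closer matching_other openers_subset
  unfolding openers_def by force

lemma closers_rank_matching: "closers n m = Cs"
  using opener_less_matching matching_less_closer matching_other closers_subset
  unfolding closers_def by force

lemma fixpts_rank_matching: "fixpts n m = {1..n} - Os - Cs"
  using opener_less_matching matching_less_closer matching_other
  unfolding fixpts_def by force

lemma nonnesting_involution_rank_matching: "nonnesting_involution n m"
proof
  show "m permutes {1..n}" unfolding permutes_def
    using matching_other matching_involution openers_subset closers_subset by (metis subsetD)
next
  show "m (m x) = x" for x by (rule matching_involution)
next
  fix i j
  assume "i \<in> openers n m" "j \<in> openers n m" "i < j"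
  then have ij: "i \<in> Os" "j \<in> Os" "i < j" using openers_rank_matching by auto
  then have "count_le Cs (m i) < count_le Cs (m j)"
    using count_le_less[OF finite_openers ij(3) ij(2)] matching_opener by simp
  then show "m i < m j"
    using count_le_le_iff[OF finite_closers] matching_opener ij by (meson not_le)
next
  fix i f
  assume "i \<in> openers n m" "f \<in> fixpts n m" "i < f" "f < m i"
  then have i: "i \<in> Os" and f: "f \<in> {1..n} - Os - Cs" and less: "i < f" "f < m i"
    using openers_rank_matching fixpts_rank_matching by auto
  have "m i \<in> Cs" "count_le Cs (m i) = count_le Os i" using matching_opener[OF i] by auto
  then have "downs Os i = downs Cs (m i)"
    using count_le_eq_downs[OF openers_subset] count_le_eq_downs[OF closers_subset] by simp
  moreover have "downs Os i \<le> downs Os (f - 1)" using less by (intro downs_mono) simp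
  moreover have "downs Cs (f - 1) < downs Cs (m i)"
    using less \<open>m i \<in> Cs\<close> by (intro downs_less_downs_mem) simp_all
  ultimately show False using balanced[OF f] by simp
qed

end

context lattice_path
begin

lemma ballot_pair_matched: "ballot_pair n (matched_ups n D) (matched_downs D)"
proof
  show "matched_ups n D \<subseteq> {1..n}" "matched_downs D \<subseteq> {1..n}"
    "matched_ups n D \<inter> matched_downs D = {}"
    unfolding matched_ups_def matched_downs_def using path_subset by auto
  show "card (matched_ups n D) = card (matched_downs D)" by (rule card_matched_eq)
  show "\<And>q. q \<le> n \<Longrightarrow> downs (matched_downs D) q \<le> downs (matched_ups n D) q"
    by (rule downs_matched_le)
  fix f
  assume "f \<in> {1..n} - matched_ups n D - matched_downs D"
  then have "f \<in> unmatched_downs D \<or> f \<in> unmatched_ups n D"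
    unfolding matched_ups_def matched_downs_def by auto
  then show "downs (matched_ups n D) (f - 1) = downs (matched_downs D) (f - 1)"
    using balanced_before_unmatched_down balanced_before_unmatched_up by blast
qed

abbreviation path_inv :: "nat \<Rightarrow> nat" where
  "path_inv \<equiv> rank_matching (matched_ups n D) (matched_downs D)"

lemma nonnesting_involution_path_inv: "nonnesting_involution n path_inv"
  by (rule ballot_pair.nonnesting_involution_rank_matching[OF ballot_pair_matched])

lemma closers_path_inv: "closers n path_inv = matched_downs D"
  by (rule ballot_pair.closers_rank_matching[OF ballot_pair_matched])

lemma fixpts_path_inv: "fixpts n path_inv = unmatched_downs D \<union> unmatched_ups n D"
  using ballot_pair.fixpts_rank_matching[OF ballot_pair_matched] unmatched_downs_subset
    unmatched_ups_subset path_subset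
  unfolding matched_ups_def matched_downs_def by auto

lemma low_fixpts_path_inv: "low_fixpts (card D) n path_inv = unmatched_downs D"
proof -
  have t: "card D - card (closers n path_inv) = card (unmatched_downs D)"
    using card_unmatched_downs_add closers_path_inv by simp
  have "f \<in> low_fixpts (card D) n path_inv \<longleftrightarrow> f \<in> unmatched_downs D"
    if f: "f \<in> fixpts n path_inv" for f
  proof (cases "f \<in> unmatched_downs D")
    case True
    then have "{g \<in> fixpts n path_inv. g \<le> f} \<subseteq> unmatched_downs D"
      using fixpts_path_inv unmatched_downs_less_ups by fastforce
    then have "count_le (fixpts n path_inv) f \<le> card (unmatched_downs D)"
      unfolding count_le_def using finite_path unmatched_downs_subset
      by (meson card_mono finite_subset)
    then show ?thesis using True f unfolding low_fixpts_def t by simp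
  next
    case False
    then have "f \<in> unmatched_ups n D" using f fixpts_path_inv by auto
    then have "insert f (unmatched_downs D) \<subseteq> {g \<in> fixpts n path_inv. g \<le> f}"
      using f fixpts_path_inv unmatched_downs_less_ups by fastforce
    then have "card (insert f (unmatched_downs D)) \<le> count_le (fixpts n path_inv) f"
      unfolding count_le_def
      using nonnesting_involution.finite_fixpts[OF nonnesting_involution_path_inv]
      by (intro card_mono) auto
    moreover have "card (insert f (unmatched_downs D)) = Suc (card (unmatched_downs D))"
      using False finite_path unmatched_downs_subset finite_subset by (metis card_insert_disjoint)
    ultimately show ?thesis using False unfolding low_fixpts_def t by simp
  qed
  then show ?thesis
    using fixpts_path_inv unfolding low_fixpts_def by auto
qed

lemma inv_word_path_inv: "inv_word (card D) n path_inv = D"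
  unfolding inv_word_def closers_path_inv low_fixpts_path_inv
  using unmatched_downs_subset by (auto simp: matched_downs_def)

end

lemma path_inv_in_inv321_fp:
  assumes "D \<in> words a b"
  shows "lattice_path.path_inv (a + b) D \<in> inv321_fp a b"
proof -
  interpret lattice_path "a + b" D
    using assms unfolding words_def by unfold_locales simp
  interpret nonnesting_involution "a + b" path_inv
    by (rule nonnesting_involution_path_inv)
  have "card (matched_downs D) \<le> a"
    using card_unmatched_downs_add assms unfolding words_def by simp
  then have "b - a \<le> fp (a + b) path_inv"
    using fp_eq_card_fixpts card_fixpts closers_path_inv by simp
  moreover have "path_inv \<circ> path_inv = id" using involution by (auto simp: fun_eq_iff)
  ultimately show ?thesis
    unfolding inv321_fp_def inv321_def using permutes avoids321 by simp
qed

lemma bij_betw_inv_word: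
  assumes "a \<le> b"
  shows "bij_betw (inv_word a (a + b)) (inv321_fp a b) (words a b)"
proof -
  have "inj_on (inv_word a (a + b)) (inv321_fp a b)"
    by (intro inj_onI) (auto intro: inv_word_inj inv321_fp_imp_nonnesting_involution)
  moreover have "inv_word a (a + b) ` inv321_fp a b = words a b"
  proof (intro equalityI subsetI)
    fix D
    assume D: "D \<in> words a b"
    then interpret lattice_path "a + b" D
      unfolding words_def by unfold_locales simp
    have "inv_word a (a + b) path_inv = D"
      using inv_word_path_inv D unfolding words_def by simp
    then show "D \<in> inv_word a (a + b) ` inv321_fp a b"
      using path_inv_in_inv321_fp[OF D] by (metis imageI)
  qed (use inv_word_in_words[OF assms] in blast)
  ultimately show ?thesis unfolding bij_betw_def by simp
qed

theorem mainTheorem12: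
  fixes a b :: nat
  assumes "a \<le> b"
  shows "\<exists>\<theta>. bij_betw \<theta> {p \<in> inv321 (a + b). fp (a + b) p \<ge> b - a} (young a b)
              \<and> (\<forall>p \<in> {p \<in> inv321 (a + b). fp (a + b) p \<ge> b - a}. Des (a + b) p = hookdec (\<theta> p))"
proof -
  define \<theta> where "\<theta> = (\<lambda>(A, B). frob_diagram A B) \<circ> word_frob a b \<circ> inv_word a (a + b)"
  have "bij_betw \<theta> (inv321_fp a b) (young a b)"
    unfolding \<theta>_def using bij_betw_inv_word[OF assms] bij_betw_word_frob bij_betw_frob_diagram
    by (intro bij_betw_trans)
  moreover have "Des (a + b) p = hookdec (\<theta> p)" if "p \<in> inv321_fp a b" for p
    using inv321_fp_imp_nonnesting_involution[OF that] nonnesting_involution.Des_eq_peaks_inv_word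
      hookdec_word_frob[OF inv_word_in_words[OF assms that]]
    unfolding \<theta>_def by simp
  ultimately show ?thesis unfolding inv321_fp_def by auto
qed

end
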